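(* Let $\xi^*=\sum_{d=1}^S w_d^*\bar\xi_d$ be an invariant design which is $D$-optimal on $\mathcal{X}^{(S)}$ (i.e. $\mathbf{M}(\xi^* )$ is nonsingular and $\det\mathbf{M}(\xi^* )\ge\det\mathbf{M}(\xi)$ for every approximate design $\xi$ on $\mathcal{X}^{(S)}$). Then the set $\{d: w^*_d>0\}$ of comparison depths used by $\xi^*$ has at most three elements, and it is contained in $\{d^*,d^*+1,S\}$ for some $d^*\in\{1,\dots,S\}$.
   Context: Fix integers $v\ge 2$, $K\ge 3$ and $S$ with $3\le S\le K$. Let $\mathbf{e}_i$ denote the $i$th unit vector of $\mathbb{R}^{v-1}$ and $\mathbf{1}_{v-1}$ the all-ones vector. Define $\mathbf{f}_1:\{0,1,\dots,v\}\to\mathbb{R}^{v-1}$ by $\mathbf{f}_1(i)=\mathbf{e}_i$ for $1\le i\le v-1$, $\mathbf{f}_1(v)=-\mathbf{1}_{v-1}$, $\mathbf{f}_1(0)=\mathbf{0}$. For $\mathbf{i}\in\{0,\dots,v\}^K$ let $\mathbf{f}(\mathbf{i})\in\mathbb{R}^p$ stack $\mathbf{f}_1(i_k)$ ($k=1,\dots,K$), then $\mathbf{f}_1(i_k)\otimes\mathbf{f}_1(i_\ell)$ ($k<\ell$), then $\mathbf{f}_1(i_k)\otimes\mathbf{f}_1(i_\ell)\otimes\mathbf{f}_1(i_m)$ ($k<\ell<m$); $p=K(v-1)+\binom K2(v-1)^2+\binom K3(v-1)^3$. The design region $\mathcal{X}^{(S)}$ is the set of ordered pairs $(\mathbf{i},\mathbf{j})$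 in $\{0,\dots,v\}^K$ for which there is a set $A$ of exactly $S$ attributes with $i_k,j_k\in\{1,\dots,v\}$ for $k\in A$ and $i_k=j_k=0$ for $k\notin A$; $\mathcal{X}^{(S)}_d$ (comparison depth $d$) is the subset with $i_k\ne j_k$ for exactly $d$ indices $k$. An approximate design is a finitely supported probability measure $\xi$ on $\mathcal{X}^{(S)}$ with information matrix $\mathbf{M}(\xi)=\sum\xi(\mathbf{i},\mathbf{j})(\mathbf{f}(\mathbf{i})-\mathbf{f}(\mathbf{j}))(\mathbf{f}(\mathbf{i})-\mathbf{f}(\mathbf{j}))^\top$; $\bar\xi_d$ is the uniform design on $\mathcal{X}^{(S)}_d$, and designs $\sum_{d=1}^S w_d\bar\xi_d$ ($w_d\ge0$, $\sum w_d=1$) are called invariant. *)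

theory Defs
  imports "Jordan_Normal_Form.Determinant"
begin

definition f1 :: "nat \<Rightarrow> nat \<Rightarrow> real vec" where
  "f1 v i = vec (v - 1) (\<lambda>r. if i = 0 then 0 else if i = v then -1
                               else if r + 1 = i then 1 else 0)"

definition kron_vec :: "real vec \<Rightarrow> real vec \<Rightarrow> real vec" where
  "kron_vec a b = vec (dim_vec a * dim_vec b) (\<lambda>j. a $ (j div dim_vec b) * b $ (j mod dim_vec b))"

definition concat_vec :: "real vec list \<Rightarrow> real vec" where
  "concat_vec xs = foldr (\<lambda>a b. a @\<^sub>v b) xs (vec 0 (\<lambda>_. 0))"

definition regvec :: "nat \<Rightarrow> nat \<Rightarrow> nat list \<Rightarrow> real vec" where
  "regvec v K i = concat_vec
     ([f1 v (i ! k). k \<leftarrow> [0..<K]] @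
      [kron_vec (f1 v (i ! k)) (f1 v (i ! l)). k \<leftarrow> [0..<K], l \<leftarrow> [Suc k..<K]] @
      [kron_vec (kron_vec (f1 v (i ! k)) (f1 v (i ! l))) (f1 v (i ! m)).
          k \<leftarrow> [0..<K], l \<leftarrow> [Suc k..<K], m \<leftarrow> [Suc l..<K]])"

definition nparams :: "nat \<Rightarrow> nat \<Rightarrow> nat" where
  "nparams v K = K * (v - 1) + (K choose 2) * (v - 1)^2 + (K choose 3) * (v - 1)^3"

definition profiles :: "nat \<Rightarrow> nat \<Rightarrow> nat list set" where
  "profiles v K = {xs. length xs = K \<and> set xs \<subseteq> {0..v}}"

definition design_region :: "nat \<Rightarrow> nat \<Rightarrow> nat \<Rightarrow> (nat list \<times> nat list) set" where
  "design_region v K S = {(i, j). i \<in> profiles v K \<and> j \<in> profiles v K \<and>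
     (\<exists>A \<subseteq> {..<K}. card A = S \<and>
        (\<forall>k<K. (k \<in> A \<longrightarrow> i ! k \<in> {1..v} \<and> j ! k \<in> {1..v}) \<and>
               (k \<notin> A \<longrightarrow> i ! k = 0 \<and> j ! k = 0)))}"

definition depth_region :: "nat \<Rightarrow> nat \<Rightarrow> nat \<Rightarrow> nat \<Rightarrow> (nat list \<times> nat list) set" where
  "depth_region v K S d = {(i, j) \<in> design_region v K S. card {k. k < K \<and> i ! k \<noteq> j ! k} = d}"

definition is_design :: "nat \<Rightarrow> nat \<Rightarrow> nat \<Rightarrow> (nat list \<times> nat list \<Rightarrow> real) \<Rightarrow> bool" where
  "is_design v K S \<xi> \<longleftrightarrow> (\<forall>x. \<xi> x \<ge> 0) \<and> (\<forall>x. x \<notin> design_region v K S \<longrightarrow> \<xi> x = 0)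
     \<and> (\<Sum>x\<in>design_region v K S. \<xi> x) = 1"

definition info_matrix :: "nat \<Rightarrow> nat \<Rightarrow> nat \<Rightarrow> (nat list \<times> nat list \<Rightarrow> real) \<Rightarrow> real mat" where
  "info_matrix v K S \<xi> = mat (nparams v K) (nparams v K) (\<lambda>(r, c).
     \<Sum>x\<in>design_region v K S. \<xi> x *
        ((regvec v K (fst x) - regvec v K (snd x)) $ r) *
        ((regvec v K (fst x) - regvec v K (snd x)) $ c))"

definition uniform_depth_design :: "nat \<Rightarrow> nat \<Rightarrow> nat \<Rightarrow> nat \<Rightarrow> (nat list \<times> nat list \<Rightarrow> real)" where
  "uniform_depth_design v K S d = (\<lambda>x. if x \<in> depth_region v K S d
      then 1 / real (card (depth_region v K S d)) else 0)"

definition D_optimal :: "nat \<Rightarrow> nat \<Rightarrow> nat \<Rightarrow> (nat list \<times> nat list \<Rightarrow> real) \<Rightarrow> bool" where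
  "D_optimal v K S \<xi> \<longleftrightarrow> is_design v K S \<xi> \<and> det (info_matrix v K S \<xi>) \<noteq> 0 \<and>
     (\<forall>\<eta>. is_design v K S \<eta> \<longrightarrow> det (info_matrix v K S \<eta>) \<le> det (info_matrix v K S \<xi>))"

end

theory Submission
  imports Defs
begin

text \<open>Every coordinate of the regression vector is a product, over a set \<open>T\<close> of at most three
attributes, of effects-coded level indicators. Averaging over the uniform design of depth \<open>d\<close>
factorises attribute by attribute: the information matrix of the invariant design with weights \<open>w\<close>
is \<open>diag(\<mu>\<^sub>w(T\<^sub>r)) * B\<close> with \<open>B\<close> independent of \<open>w\<close>, and \<open>\<mu>\<^sub>w(T) = \<Sum>\<^sub>d w\<^sub>d \<kappa>(T,d)\<close>,
where \<open>\<kappa>(T,d)\<close> is a polynomial of degree at most three in \<open>d\<close> without constant term (the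
proportion of \<open>d\<close>-subsets of an \<open>S\<close>-set containing a given \<open>u\<close>-set is the ratio of falling
factorials \<open>(d)\<^sub>u / (S)\<^sub>u\<close>).

Since \<open>det M = (\<Prod>\<^sub>r \<mu>\<^sub>w(T\<^sub>r)) * det B\<close>, optimality of \<open>w\<close> gives the equivalence condition
\<open>h(d) = \<Sum>\<^sub>r \<kappa>(T\<^sub>r,d) / \<mu>\<^sub>w(T\<^sub>r) \<le> p\<close> on \<open>{1..S}\<close>, with equality wherever \<open>w\<^sub>d > 0\<close>. So \<open>h - p\<close>
is a cubic which is negative at \<open>0\<close>, nonpositive at the integers of \<open>{1..S}\<close> and zero on the
support of \<open>w\<close>; such a cubic cannot vanish at two points \<open>a < b < S\<close> with \<open>b \<ge> a + 2\<close>.\<close>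

section \<open>Coordinates of the regression vector\<close>

fun term_vec :: "nat \<Rightarrow> nat list \<Rightarrow> nat list \<Rightarrow> real vec" where
  "term_vec v i [k] = f1 v (i!k)"
| "term_vec v i [k,l] = kron_vec (f1 v (i!k)) (f1 v (i!l))"
| "term_vec v i [k,l,m] = kron_vec (kron_vec (f1 v (i!k)) (f1 v (i!l))) (f1 v (i!m))"
| "term_vec v i _ = vec 0 (\<lambda>_. 0)"

definition interaction_terms :: "nat \<Rightarrow> nat list list" where
  "interaction_terms K = [[k]. k \<leftarrow> [0..<K]] @ [[k,l]. k \<leftarrow> [0..<K], l \<leftarrow> [Suc k..<K]] @
     [[k,l,m]. k \<leftarrow> [0..<K], l \<leftarrow> [Suc k..<K], m \<leftarrow> [Suc l..<K]]"

lemma regvec_eq_concat_term_vecs: "regvec v K i = concat_vec (map (term_vec v i) (interaction_terms K))"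
  unfolding regvec_def interaction_terms_def by (simp add: map_concat comp_def)

lemma mem_interaction_terms: "T \<in> set (interaction_terms K) \<longleftrightarrow>
   (\<exists>k<K. T = [k]) \<or> (\<exists>k l. k < l \<and> l < K \<and> T = [k,l]) \<or> (\<exists>k l m. k < l \<and> l < m \<and> m < K \<and> T = [k,l,m])"
  unfolding interaction_terms_def by (auto simp: image_iff; force)

lemma dim_f1[simp]: "dim_vec (f1 v a) = v - 1"
  by (simp add: f1_def)

lemma index_f1: "\<alpha> < v - 1 \<Longrightarrow> f1 v a $ \<alpha> = (if a = 0 then 0 else if a = v then -1 else if \<alpha> + 1 = a then 1 else 0)"
  by (simp add: f1_def)

lemma dim_kron_vec[simp]: "dim_vec (kron_vec a b) = dim_vec a * dim_vec b"
  by (simp add: kron_vec_def)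

lemma index_kron_vec: "j < dim_vec a * dim_vec b \<Longrightarrow> kron_vec a b $ j = a $ (j div dim_vec b) * b $ (j mod dim_vec b)"
  by (simp add: kron_vec_def)

lemma dim_concat_vec: "dim_vec (concat_vec xs) = sum_list (map dim_vec xs)"
  by (induction xs) (auto simp: concat_vec_def)

fun block_position :: "nat list \<Rightarrow> nat \<Rightarrow> nat \<times> nat" where
  "block_position [] r = (0, r)"
| "block_position (n # ns) r = (if r < n then (0, r) else (Suc (fst (block_position ns (r - n))), snd (block_position ns (r - n))))"

lemma index_concat_vec:
  "r < sum_list (map dim_vec xs) \<Longrightarrow> fst (block_position (map dim_vec xs) r) < length xs \<and>
     snd (block_position (map dim_vec xs) r) < dim_vec (xs ! fst (block_position (map dim_vec xs) r)) \<and>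
     concat_vec xs $ r = (xs ! fst (block_position (map dim_vec xs) r)) $ snd (block_position (map dim_vec xs) r)"
proof (induction xs arbitrary: r)
  case Nil thus ?case by simp
next
  case (Cons a xs)
  have cv: "concat_vec (a # xs) = a @\<^sub>v concat_vec xs" by (simp add: concat_vec_def)
  show ?case
  proof (cases "r < dim_vec a")
    case True thus ?thesis using Cons.prems by (simp add: cv dim_concat_vec)
  next
    case False
    with Cons.prems have "r - dim_vec a < sum_list (map dim_vec xs)" by simp
    from Cons.IH[OF this] False show ?thesis using Cons.prems by (simp add: cv dim_concat_vec)
  qed
qed

definition term_dims :: "nat \<Rightarrow> nat \<Rightarrow> nat list" where
  "term_dims v K = map (\<lambda>T. (v-1) ^ length T) (interaction_terms K)"

lemma dim_term_vec: "T \<in> set (interaction_terms K) \<Longrightarrow> dim_vec (term_vec v i T) = (v-1) ^ length T"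
  unfolding mem_interaction_terms by (auto simp: power2_eq_square power3_eq_cube)

lemma map_dim_term_vecs: "map dim_vec (map (term_vec v i) (interaction_terms K)) = term_dims v K"
  unfolding term_dims_def by (simp add: dim_term_vec)

lemma sum_diff_Suc_choose_2: "(\<Sum>l=a..<K. K - Suc l) = (K - a) choose 2"
proof (induction K)
  case (Suc K)
  show ?case
  proof (cases "a \<le> K")
    case True
    have "(\<Sum>l=a..<Suc K. Suc K - Suc l) = (\<Sum>l=a..<K. (K - Suc l) + 1)"
      using True by (simp add: sum.atLeastLessThan_Suc Suc_diff_Suc)
    also have "\<dots> = (\<Sum>l=a..<K. K - Suc l) + (K - a)" by (simp only: sum.distrib) simp
    also have "\<dots> = (Suc K - a) choose 2"
      using True Suc by (simp add: Suc_diff_le numeral_2_eq_2 add.commute)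
    finally show ?thesis .
  qed simp
qed simp

lemma sum_sum_diff_Suc_choose_3: "(\<Sum>k=0..<K. \<Sum>l=Suc k..<K. K - Suc l) = K choose 3"
proof (cases K)
  case (Suc n)
  have "(\<Sum>k=0..<K. \<Sum>l=Suc k..<K. K - Suc l) = (\<Sum>k=0..<K. (K - Suc k) choose 2)"
    by (simp add: sum_diff_Suc_choose_2)
  also have "\<dots> = (\<Sum>j=0..<K. j choose 2)"
    by (rule sum.reindex_bij_witness[where i="\<lambda>j. K - Suc j" and j="\<lambda>j. K - Suc j"]) auto
  also have "\<dots> = (\<Sum>j\<le>n. j choose 2)"
    using Suc by (simp add: atLeast0LessThan lessThan_Suc_atMost)
  also have "\<dots> = Suc n choose Suc 2" by (rule sum_choose_upper)
  finally show ?thesis using Suc by (simp add: numeral_3_eq_3)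
qed simp

lemma sum_list_concat: "sum_list (concat xss) = sum_list (map sum_list (xss :: 'a :: monoid_add list list))"
  by (induction xss) auto

lemma sum_list_term_dims: "sum_list (term_dims v K) = nparams v K"
proof -
  have "sum_list (term_dims v K) = K * (v-1) + (\<Sum>k=0..<K. K - Suc k) * (v-1)^2 +
        (\<Sum>k=0..<K. \<Sum>l=Suc k..<K. K - Suc l) * (v-1)^3"
    by (simp add: term_dims_def interaction_terms_def map_concat comp_def sum_list_triv sum_list_upt
        length_concat sum_list_concat sum_distrib_right power2_eq_square power3_eq_cube mult.assoc
        flip: sum_set_upt_conv_sum_list_nat)
  then show ?thesis
    using sum_diff_Suc_choose_2[where a=0] sum_sum_diff_Suc_choose_3 by (simp add: nparams_def)
qed

lemma dim_regvec: "dim_vec (regvec v K i) = nparams v K"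
  by (metis regvec_eq_concat_term_vecs dim_concat_vec map_dim_term_vecs sum_list_term_dims)

text \<open>The level index that attribute \<open>x\<close> of the term \<open>T\<close> contributes to entry \<open>q\<close> of the Kronecker
  product \<open>term_vec v i T\<close>: the digits of \<open>q\<close> in base \<open>n = v - 1\<close>.\<close>
fun term_digit :: "nat \<Rightarrow> nat list \<Rightarrow> nat \<Rightarrow> nat \<Rightarrow> nat" where
  "term_digit n [k] q x = q"
| "term_digit n [k,l] q x = (if x = k then q div n else q mod n)"
| "term_digit n [k,l,m] q x = (if x = k then q div n div n else if x = l then q div n mod n else q mod n)"
| "term_digit n _ q x = 0"

lemma index_term_vec:
  assumes "T \<in> set (interaction_terms K)" "q < (v-1) ^ length T" "v \<ge> 2"
  shows "term_vec v i T $ q = (\<Prod>k\<in>set T. f1 v (i!k) $ term_digit (v-1) T q k)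
        \<and> (\<forall>k\<in>set T. term_digit (v-1) T q k < v - 1)"
proof -
  let ?n = "v - 1"
  have n: "?n > 0" using assms by simp
  from assms(1)[unfolded mem_interaction_terms] show ?thesis
  proof (elim disjE exE conjE)
    fix k assume "k < K" "T = [k]" thus ?thesis using assms by simp
  next
    fix k l assume kl: "k < l" "l < K" "T = [k,l]"
    have q: "q < ?n * ?n" using assms kl by (simp add: power2_eq_square)
    hence "q div ?n < ?n" using n by (simp add: div_less_iff_less_mult)
    moreover have "q mod ?n < ?n" using n by simp
    ultimately show ?thesis using kl q by (simp add: index_kron_vec)
  next
    fix k l m assume klm: "k < l" "l < m" "m < K" "T = [k,l,m]"
    have q: "q < ?n * ?n * ?n" using assms klm by (simp add: power3_eq_cube mult.assoc)
    hence o1: "q div ?n < ?n * ?n" using n by (simp add: div_less_iff_less_mult)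
    hence "q div ?n div ?n < ?n" using n by (simp add: div_less_iff_less_mult)
    moreover have "q div ?n mod ?n < ?n" "q mod ?n < ?n" using n by simp_all
    ultimately show ?thesis using klm q o1 by (simp add: index_kron_vec)
  qed
qed

definition coord_term :: "nat \<Rightarrow> nat \<Rightarrow> nat \<Rightarrow> nat list" where
  "coord_term v K r = interaction_terms K ! fst (block_position (term_dims v K) r)"

definition coord_attrs :: "nat \<Rightarrow> nat \<Rightarrow> nat \<Rightarrow> nat set" where
  "coord_attrs v K r = set (coord_term v K r)"

definition coord_level :: "nat \<Rightarrow> nat \<Rightarrow> nat \<Rightarrow> nat \<Rightarrow> nat" where
  "coord_level v K r k = term_digit (v-1) (coord_term v K r) (snd (block_position (term_dims v K) r)) k"

lemma index_regvec:
  assumes "r < nparams v K" "v \<ge> 2"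
  shows "regvec v K i $ r = (\<Prod>k\<in>coord_attrs v K r. f1 v (i!k) $ coord_level v K r k)"
    and "\<forall>k\<in>coord_attrs v K r. coord_level v K r k < v - 1"
    and "coord_term v K r \<in> set (interaction_terms K)"
proof -
  obtain b q where bq: "block_position (term_dims v K) r = (b, q)" by fastforce
  have "r < sum_list (map dim_vec (map (term_vec v i) (interaction_terms K)))"
    by (metis map_dim_term_vecs sum_list_term_dims assms(1))
  note block = index_concat_vec[OF this, unfolded map_dim_term_vecs bq fst_conv snd_conv]
  then have b: "b < length (interaction_terms K)" by simp
  then show T: "coord_term v K r \<in> set (interaction_terms K)" by (simp add: coord_term_def bq)
  have "q < (v-1) ^ length (coord_term v K r)"
    using block dim_term_vec[OF T] by (simp add: coord_term_def bq b)
  note entry = index_term_vec[OF T this assms(2), of i]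
  show "regvec v K i $ r = (\<Prod>k\<in>coord_attrs v K r. f1 v (i!k) $ coord_level v K r k)"
    using block entry
    by (simp add: regvec_eq_concat_term_vecs coord_term_def coord_attrs_def coord_level_def bq b)
  show "\<forall>k\<in>coord_attrs v K r. coord_level v K r k < v - 1"
    using entry by (simp add: coord_attrs_def coord_level_def coord_term_def bq)
qed

lemma coord_attrs_subset: assumes "r < nparams v K" "v \<ge> 2" shows "coord_attrs v K r \<subseteq> {..<K}"
  using index_regvec(3)[OF assms] unfolding coord_attrs_def mem_interaction_terms by auto

lemma card_coord_attrs: assumes "r < nparams v K" "v \<ge> 2" shows "card (coord_attrs v K r) \<le> 3"
proof -
  have "length (coord_term v K r) \<le> 3"
    using index_regvec(3)[OF assms] unfolding mem_interaction_terms by auto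
  thus ?thesis unfolding coord_attrs_def using card_length[of "coord_term v K r"] by linarith
qed

section \<open>Enumeration of the depth regions\<close>

text \<open>A pair of profiles at depth \<open>d\<close> is enumerated by its support \<open>A\<close> (the \<open>S\<close> attributes in use),
  the set \<open>D \<subseteq> A\<close> of attributes on which the two profiles differ, and the pair of levels chosen
  at each attribute.\<close>
definition supports :: "nat \<Rightarrow> nat \<Rightarrow> nat \<Rightarrow> (nat set \<times> nat set) set" where
  "supports K S d = {(A,D). A \<subseteq> {..<K} \<and> card A = S \<and> D \<subseteq> A \<and> card D = d}"

definition level_pairs :: "nat \<Rightarrow> nat set \<Rightarrow> nat set \<Rightarrow> nat \<Rightarrow> (nat \<times> nat) set" where
  "level_pairs v A D k = (if k \<in> A then (if k \<in> D then {(a,b). a \<in> {1..v} \<and> b \<in> {1..v} \<and> a \<noteq> b}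
                  else (\<lambda>a. (a,a)) ` {1..v}) else {(0,0)})"

definition profile_pair :: "nat \<Rightarrow> (nat \<Rightarrow> nat \<times> nat) \<Rightarrow> nat list \<times> nat list" where
  "profile_pair K z = (map (\<lambda>k. fst (z k)) [0..<K], map (\<lambda>k. snd (z k)) [0..<K])"

definition support_assignments ::
    "nat \<Rightarrow> nat \<Rightarrow> nat \<Rightarrow> nat \<Rightarrow> ((nat set \<times> nat set) \<times> (nat \<Rightarrow> nat \<times> nat)) set" where
  "support_assignments v K S d = (SIGMA ad:supports K S d. PiE {..<K} (level_pairs v (fst ad) (snd ad)))"

lemma finite_supports: "finite (supports K S d)"
proof -
  have "supports K S d \<subseteq> Pow {..<K} \<times> Pow {..<K}" by (auto simp: supports_def)
  thus ?thesis by (rule finite_subset) auto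
qed

lemma finite_level_pairs: "finite (level_pairs v A D k)"
proof -
  have "level_pairs v A D k \<subseteq> {0..v} \<times> {0..v}" by (auto simp: level_pairs_def)
  thus ?thesis by (rule finite_subset) auto
qed

lemma level_pairs_fst_nonzero_iff: "y \<in> level_pairs v A D k \<Longrightarrow> (fst y \<noteq> 0) = (k \<in> A)"
  by (auto simp: level_pairs_def split: if_splits)

lemma level_pairs_differ_iff: "y \<in> level_pairs v A D k \<Longrightarrow> (fst y \<noteq> snd y) = (k \<in> A \<and> k \<in> D)"
  by (auto simp: level_pairs_def split: if_splits)

lemma level_pairs_bounded: "y \<in> level_pairs v A D k \<Longrightarrow> fst y \<le> v \<and> snd y \<le> v"
  by (auto simp: level_pairs_def split: if_splits)

lemma support_assignment_support: assumes "((A,D),z) \<in> support_assignments v K S d"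
  shows "A = {k. k < K \<and> fst (z k) \<noteq> 0} \<and> D = {k. k < K \<and> fst (z k) \<noteq> snd (z k)}"
proof -
  have AK: "A \<subseteq> {..<K}" "D \<subseteq> A" and zk: "\<And>k. k < K \<Longrightarrow> z k \<in> level_pairs v A D k"
    using assms by (auto simp: support_assignments_def supports_def PiE_def Pi_def)
  have "k \<in> A \<longleftrightarrow> k < K \<and> fst (z k) \<noteq> 0" for k
    using AK zk[of k] level_pairs_fst_nonzero_iff[of "z k" v A D k] by blast
  moreover have "k \<in> D \<longleftrightarrow> k < K \<and> fst (z k) \<noteq> snd (z k)" for k
    using AK zk[of k] level_pairs_differ_iff[of "z k" v A D k] by blast
  ultimately show ?thesis by blast
qed

lemma inj_on_profile_pair: "inj_on (\<lambda>(ad,z). profile_pair K z) (support_assignments v K S d)"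
proof (rule inj_onI)
  fix x y assume x: "x \<in> support_assignments v K S d" and y: "y \<in> support_assignments v K S d"
    and exy: "(\<lambda>(ad,z). profile_pair K z) x = (\<lambda>(ad,z). profile_pair K z) y"
  obtain A D z where xx: "x = ((A,D),z)" by (metis prod.collapse)
  obtain A' D' z' where yy: "y = ((A',D'),z')" by (metis prod.collapse)
  have s: "((A,D),z) \<in> support_assignments v K S d" "((A',D'),z') \<in> support_assignments v K S d" using x y xx yy by auto
  have e: "profile_pair K z = profile_pair K z'" using exy xx yy by simp
  have zk: "z k = z' k" if "k < K" for k
    using e that by (auto simp: profile_pair_def prod_eq_iff)
  have z: "z = z'"
  proof
    fix k show "z k = z' k"
      using s zk by (cases "k < K") (auto simp: support_assignments_def PiE_def extensional_def)
  qed
  have A: "A = A'" and D: "D = D'" using support_assignment_support[OF s(1)] support_assignment_support[OF s(2)] z by auto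
  show "x = y" using A D z xx yy by simp
qed

lemma nth_profile_pair: "k < K \<Longrightarrow> fst (profile_pair K z) ! k = fst (z k) \<and> snd (profile_pair K z) ! k = snd (z k)"
  by (simp add: profile_pair_def)

lemma profile_pair_in_depth_region:
  assumes "((A,D),z) \<in> support_assignments v K S d" shows "profile_pair K z \<in> depth_region v K S d"
proof -
  have AK: "A \<subseteq> {..<K}" "card A = S" "D \<subseteq> A" "card D = d" and zk: "\<And>k. k < K \<Longrightarrow> z k \<in> level_pairs v A D k"
    using assms by (auto simp: support_assignments_def supports_def PiE_def Pi_def)
  note ad = support_assignment_support[OF assms]
  have zr: "\<And>k. k < K \<Longrightarrow> fst (z k) \<le> v \<and> snd (z k) \<le> v" using zk level_pairs_bounded by blast
  have pi: "fst (profile_pair K z) \<in> profiles v K" "snd (profile_pair K z) \<in> profiles v K"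
    using zr by (auto simp: profiles_def profile_pair_def)
  have "\<forall>k<K. (k \<in> A \<longrightarrow> fst (profile_pair K z) ! k \<in> {1..v} \<and> snd (profile_pair K z) ! k \<in> {1..v}) \<and>
               (k \<notin> A \<longrightarrow> fst (profile_pair K z) ! k = 0 \<and> snd (profile_pair K z) ! k = 0)"
  proof (intro allI impI conjI)
    fix k assume k: "k < K"
    { assume "k \<in> A" thus "fst (profile_pair K z) ! k \<in> {1..v}" "snd (profile_pair K z) ! k \<in> {1..v}"
        using zk[OF k] nth_profile_pair[OF k, of z] by (auto simp: level_pairs_def split: if_splits) }
    { assume "k \<notin> A" thus "fst (profile_pair K z) ! k = 0" "snd (profile_pair K z) ! k = 0"
        using zk[OF k] nth_profile_pair[OF k, of z] by (auto simp: level_pairs_def split: if_splits) }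
  qed
  hence dr: "profile_pair K z \<in> design_region v K S" using pi AK
    unfolding design_region_def by (cases "profile_pair K z") auto
  have "{k. k < K \<and> fst (profile_pair K z) ! k \<noteq> snd (profile_pair K z) ! k} = D"
    using ad nth_profile_pair by auto
  thus ?thesis using dr AK unfolding depth_region_def by (cases "profile_pair K z") auto
qed

lemma depth_region_eq_image: "depth_region v K S d = (\<lambda>(ad,z). profile_pair K z) ` support_assignments v K S d"
proof
  show "(\<lambda>(ad,z). profile_pair K z) ` support_assignments v K S d \<subseteq> depth_region v K S d"
    using profile_pair_in_depth_region by fastforce
next
  show "depth_region v K S d \<subseteq> (\<lambda>(ad,z). profile_pair K z) ` support_assignments v K S d"
  proof
    fix x assume x: "x \<in> depth_region v K S d"
    obtain i j where ij: "x = (i,j)" by fastforce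
    from x ij obtain A where A: "A \<subseteq> {..<K}" "card A = S"
      "\<forall>k<K. (k \<in> A \<longrightarrow> i ! k \<in> {1..v} \<and> j ! k \<in> {1..v}) \<and> (k \<notin> A \<longrightarrow> i ! k = 0 \<and> j ! k = 0)"
      and pr: "i \<in> profiles v K" "j \<in> profiles v K"
      and dd: "card {k. k < K \<and> i ! k \<noteq> j ! k} = d"
      unfolding depth_region_def design_region_def by auto
    define D where "D = {k. k < K \<and> i ! k \<noteq> j ! k}"
    have DA: "D \<subseteq> A" using A unfolding D_def by auto
    define z where "z = restrict (\<lambda>k. (i ! k, j ! k)) {..<K}"
    have zP: "z \<in> PiE {..<K} (level_pairs v A D)"
    proof (rule PiE_I)
      fix k assume "k \<in> {..<K}"
      hence k: "k < K" by simp
      show "z k \<in> level_pairs v A D k"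
        using A(3) k by (auto simp: z_def level_pairs_def D_def)
    next
      fix k assume "k \<notin> {..<K}" thus "z k = undefined" by (simp add: z_def)
    qed
    have "((A,D),z) \<in> support_assignments v K S d" using zP A DA dd unfolding support_assignments_def supports_def D_def by auto
    moreover have "profile_pair K z = (i,j)"
    proof -
      have "length i = K" "length j = K" using pr by (auto simp: profiles_def)
      thus ?thesis unfolding profile_pair_def z_def by (auto intro: nth_equalityI)
    qed
    ultimately show "x \<in> (\<lambda>(ad,z). profile_pair K z) ` support_assignments v K S d" using ij by force
  qed
qed

lemma sum_depth_region: "(\<Sum>x\<in>depth_region v K S d. g x) =
   (\<Sum>ad\<in>supports K S d. \<Sum>z\<in>PiE {..<K} (level_pairs v (fst ad) (snd ad)). g (profile_pair K z))"
proof -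
  have "(\<Sum>x\<in>depth_region v K S d. g x) = (\<Sum>y\<in>support_assignments v K S d. g ((\<lambda>(ad,z). profile_pair K z) y))"
    unfolding depth_region_eq_image by (subst sum.reindex[OF inj_on_profile_pair]) (simp add: comp_def)
  also have "\<dots> = (\<Sum>ad\<in>supports K S d. \<Sum>z\<in>PiE {..<K} (level_pairs v (fst ad) (snd ad)). g (profile_pair K z))"
    unfolding support_assignments_def by (subst sum.Sigma) (auto simp: finite_supports finite_level_pairs split_def intro!: finite_PiE)
  finally show ?thesis .
qed

lemma sum_offdiag: "(\<Sum>y\<in>{(a,b). a \<in> {1..v} \<and> b \<in> {1..v} \<and> a \<noteq> b}. G (fst y) (snd y)) =
   (\<Sum>a\<in>{1..v::nat}. \<Sum>b\<in>{1..v}. G a b) - (\<Sum>a\<in>{1..v}. G a a :: real)"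
proof -
  have "{(a,b). a \<in> {1..v} \<and> b \<in> {1..v} \<and> a \<noteq> b} = (SIGMA a:{1..v}. {1..v} - {a})"
    by auto
  then have "(\<Sum>y\<in>{(a,b). a \<in> {1..v} \<and> b \<in> {1..v} \<and> a \<noteq> b}. G (fst y) (snd y)) =
      (\<Sum>a\<in>{1..v}. \<Sum>b\<in>{1..v} - {a}. G a b)"
    by (simp add: sum.Sigma split_def)
  also have "\<dots> = (\<Sum>a\<in>{1..v}. (\<Sum>b\<in>{1..v}. G a b) - G a a)"
    by (intro sum.cong refl) (simp add: sum_diff1)
  finally show ?thesis by (simp add: sum_subtractf)
qed

lemma sum_diag: "(\<Sum>y\<in>(\<lambda>a. (a,a)) ` {1..v::nat}. G (fst y) (snd y)) = (\<Sum>a\<in>{1..v}. G a a :: real)"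
  by (subst sum.reindex) (auto simp: inj_on_def)

lemma sum_level_pairs: "(\<Sum>y\<in>level_pairs v A D k. G (fst y) (snd y)) =
  (if k \<in> A then (if k \<in> D then (\<Sum>a\<in>{1..v::nat}. \<Sum>b\<in>{1..v}. G a b) - (\<Sum>a\<in>{1..v}. G a a)
    else (\<Sum>a\<in>{1..v}. G a a)) else (G 0 0 :: real))"
  using sum_offdiag[where v=v and G=G] sum_diag[where v=v and G=G] by (simp add: level_pairs_def)

lemma sum_level_pairs_fst_snd: "(\<Sum>y\<in>level_pairs v A D k. p (fst y) * q (snd y)) =
  (if k \<in> A then (if k \<in> D then (\<Sum>a\<in>{1..v::nat}. p a) * (\<Sum>b\<in>{1..v}. q b) - (\<Sum>a\<in>{1..v}. p a * q a)
    else (\<Sum>a\<in>{1..v}. p a * q a)) else (p 0 * q 0 :: real))"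
  using sum_level_pairs[where G="\<lambda>a b. p a * q b"] by (simp add: sum_product)

lemma sum_level_pairs_fst_fst: "(\<Sum>y\<in>level_pairs v A D k. p (fst y) * q (fst y)) =
  (if k \<in> A then (if k \<in> D then (real v - 1) * (\<Sum>a\<in>{1..v::nat}. p a * q a)
    else (\<Sum>a\<in>{1..v}. p a * q a)) else (p 0 * q 0 :: real))"
  using sum_level_pairs[where G="\<lambda>a b. p a * q a"] by (simp add: algebra_simps flip: sum_distrib_left)

lemma swap_level_pairs: "prod.swap ` level_pairs v A D k = level_pairs v A D k"
  by (force simp: level_pairs_def)

lemma sum_f1_levels: assumes "\<alpha> < v - 1" shows "(\<Sum>a\<in>{1..v}. f1 v a $ \<alpha>) = 0"
proof -
  have "(\<Sum>a\<in>{1..v}. f1 v a $ \<alpha>) = (\<Sum>a\<in>{1..v}. (if a = \<alpha> + 1 then 1 else 0) - (if a = v then 1 else 0))"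
    using assms by (intro sum.cong refl) (auto simp: index_f1)
  then show ?thesis using assms by (auto simp: sum_subtractf sum.delta')
qed

lemma sum_f1_levels_prod: assumes "\<alpha> < v - 1" "\<beta> < v - 1"
  shows "(\<Sum>a\<in>{1..v}. f1 v a $ \<alpha> * f1 v a $ \<beta>) = (if \<alpha> = \<beta> then 2 else 1)"
proof -
  have "(\<Sum>a\<in>{1..v}. f1 v a $ \<alpha> * f1 v a $ \<beta>) =
     (\<Sum>a\<in>{1..v}. (if \<alpha> = \<beta> then 1 else 0) * (if a = \<alpha> + 1 then 1 else 0) + (if a = v then 1 else 0))"
    using assms by (intro sum.cong refl) (auto simp: index_f1)
  then show ?thesis using assms by (auto simp: sum.distrib sum.delta' simp flip: sum_distrib_left)
qed

section \<open>The information matrix of an invariant design\<close>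

lemma sum_PiE_product_differences:
  fixes h g :: "'i \<Rightarrow> 'a \<Rightarrow> real" and Z :: "'i \<Rightarrow> ('a \<times> 'a) set"
  assumes "finite I" and "\<And>k. k \<in> I \<Longrightarrow> finite (Z k)" and "\<And>k. k \<in> I \<Longrightarrow> prod.swap ` Z k = Z k"
  shows "(\<Sum>z\<in>PiE I Z. ((\<Prod>k\<in>I. h k (fst (z k))) - (\<Prod>k\<in>I. h k (snd (z k)))) *
                        ((\<Prod>k\<in>I. g k (fst (z k))) - (\<Prod>k\<in>I. g k (snd (z k))))) =
    2 * ((\<Prod>k\<in>I. \<Sum>y\<in>Z k. h k (fst y) * g k (fst y)) - (\<Prod>k\<in>I. \<Sum>y\<in>Z k. h k (fst y) * g k (snd y)))"
proof -
  define P where "P s t = (\<Prod>k\<in>I. \<Sum>y\<in>Z k. h k (s y) * g k (t y))" for s t :: "'a \<times> 'a \<Rightarrow> 'a"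
  have factor: "(\<Sum>z\<in>PiE I Z. (\<Prod>k\<in>I. h k (s (z k))) * (\<Prod>k\<in>I. g k (t (z k)))) = P s t" for s t
    unfolding P_def prod.distrib[symmetric] by (rule prod_sum_PiE[OF assms(1,2), symmetric])
  have swap: "(\<Sum>y\<in>Z k. f (prod.swap y)) = (\<Sum>y\<in>Z k. f y)" if "k \<in> I" for k and f :: "'a \<times> 'a \<Rightarrow> real"
    using sum.reindex[of prod.swap "Z k" f] assms(3)[OF that] by (simp add: comp_def)
  have "P snd snd = P fst fst" "P snd fst = P fst snd"
    unfolding P_def by (auto intro!: prod.cong simp: swap[where f="\<lambda>y. h _ (fst y) * g _ (fst y)", simplified]
        swap[where f="\<lambda>y. h _ (fst y) * g _ (snd y)", simplified])
  moreover have "(\<Sum>z\<in>PiE I Z. ((\<Prod>k\<in>I. h k (fst (z k))) - (\<Prod>k\<in>I. h k (snd (z k)))) *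
                        ((\<Prod>k\<in>I. g k (fst (z k))) - (\<Prod>k\<in>I. g k (snd (z k))))) =
      P fst fst - P fst snd - P snd fst + P snd snd"
    by (simp add: left_diff_distrib right_diff_distrib sum_subtractf factor)
  ultimately show ?thesis unfolding P_def by simp
qed

lemma prod_if_union_inter:
  assumes "finite I" "T \<subseteq> I" "T' \<subseteq> I"
  shows "(\<Prod>k\<in>I. if k \<in> T \<or> k \<in> T' then (if k \<in> T \<and> k \<in> T' \<and> k \<in> A then f k else 0) else 1) =
    (if T = T' \<and> T \<subseteq> A then \<Prod>k\<in>T. f k else (0::real))"
proof (cases "T = T' \<and> T \<subseteq> A")
  case True
  then have "(\<Prod>k\<in>I. if k \<in> T \<or> k \<in> T' then (if k \<in> T \<and> k \<in> T' \<and> k \<in> A then f k else 0) else 1) =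
      (\<Prod>k\<in>I. if k \<in> T then f k else 1)"
    by (intro prod.cong) auto
  with True assms show ?thesis by (simp add: prod.If_cases Int_absorb1 subset_eq)
next
  case False
  then obtain k where "k \<in> I" "(k \<in> T \<or> k \<in> T') \<and> \<not> (k \<in> T \<and> k \<in> T' \<and> k \<in> A)"
    using assms by blast
  with False assms(1) show ?thesis by (auto intro!: prod_zero)
qed

definition coord_factor :: "nat \<Rightarrow> nat set \<Rightarrow> (nat \<Rightarrow> nat) \<Rightarrow> nat \<Rightarrow> nat \<Rightarrow> real" where
  "coord_factor v T g k a = (if k \<in> T then f1 v a $ g k else 1)"

definition level_gram :: "nat \<Rightarrow> nat \<Rightarrow> nat \<Rightarrow> real" where
  "level_gram v \<alpha> \<beta> = (if \<alpha> = \<beta> then 2 else 1) / real v"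

definition level_pair_count :: "nat \<Rightarrow> nat set \<Rightarrow> nat set \<Rightarrow> nat \<Rightarrow> real" where
  "level_pair_count v A D k = (if k \<in> A then (if k \<in> D then real v * (real v - 1) else real v) else 1)"

lemma card_level_pairs: "real (card (level_pairs v A D k)) = level_pair_count v A D k"
proof -
  have "(\<Sum>y\<in>level_pairs v A D k. (\<lambda>a b. 1::real) (fst y) (snd y)) = level_pair_count v A D k"
    by (subst sum_level_pairs) (simp add: level_pair_count_def algebra_simps)
  thus ?thesis by (simp only: real_of_card)
qed

lemma index_regvec_prod: assumes "r < nparams v K" "v \<ge> 2"
  shows "regvec v K i $ r = (\<Prod>k\<in>{..<K}. coord_factor v (coord_attrs v K r) (coord_level v K r) k (i ! k))"
proof -
  have "regvec v K i $ r = (\<Prod>k\<in>coord_attrs v K r. coord_factor v (coord_attrs v K r) (coord_level v K r) k (i ! k))"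
    unfolding index_regvec(1)[OF assms] by (intro prod.cong refl) (simp add: coord_factor_def)
  also have "\<dots> = (\<Prod>k\<in>{..<K}. coord_factor v (coord_attrs v K r) (coord_level v K r) k (i ! k))"
    by (rule prod.mono_neutral_left) (auto simp: coord_factor_def coord_attrs_subset[OF assms])
  finally show ?thesis .
qed

definition diff_coord :: "nat \<Rightarrow> nat \<Rightarrow> nat \<Rightarrow> nat list \<times> nat list \<Rightarrow> real" where
  "diff_coord v K r x = regvec v K (fst x) $ r - regvec v K (snd x) $ r"

lemma coord_factor_zero: "\<forall>k\<in>T. g k < v - 1 \<Longrightarrow> coord_factor v T g k 0 = (if k \<in> T then 0 else 1)"
  by (simp add: coord_factor_def f1_def)

lemma sum_coord_factor: assumes "\<forall>k\<in>T. g k < v - 1"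
  shows "(\<Sum>a\<in>{1..v}. coord_factor v T g k a) = (if k \<in> T then 0 else real v)"
  using assms sum_f1_levels by (simp add: coord_factor_def)

lemma sum_coord_factor_prod: assumes "\<forall>k\<in>T. g k < v - 1" "\<forall>k\<in>T'. g' k < v - 1"
  shows "(\<Sum>a\<in>{1..v}. coord_factor v T g k a * coord_factor v T' g' k a) =
    (if k \<in> T \<and> k \<in> T' then (if g k = g' k then 2 else 1) else if k \<in> T \<or> k \<in> T' then 0 else real v)"
  using assms sum_f1_levels sum_f1_levels_prod
  by (simp add: coord_factor_def sum_distrib_left[symmetric] sum_distrib_right[symmetric])

lemma sum_level_pairs_coord_factor_fst_fst:
  assumes "\<forall>k\<in>T. g k < v - 1" "\<forall>k\<in>T'. g' k < v - 1" "v \<ge> 2"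
  shows "(\<Sum>y\<in>level_pairs v A D k. coord_factor v T g k (fst y) * coord_factor v T' g' k (fst y)) =
    (if k \<in> T \<or> k \<in> T' then (if k \<in> T \<and> k \<in> T' \<and> k \<in> A then level_gram v (g k) (g' k) else 0) else 1)
      * level_pair_count v A D k"
  unfolding sum_level_pairs_fst_fst sum_coord_factor_prod[OF assms(1,2)]
    coord_factor_zero[OF assms(1)] coord_factor_zero[OF assms(2)]
  using assms(3) by (auto simp: level_gram_def level_pair_count_def)

lemma sum_level_pairs_coord_factor_fst_snd:
  assumes "\<forall>k\<in>T. g k < v - 1" "\<forall>k\<in>T'. g' k < v - 1" "v \<ge> 2"
  shows "(\<Sum>y\<in>level_pairs v A D k. coord_factor v T g k (fst y) * coord_factor v T' g' k (snd y)) =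
    (if k \<in> T \<or> k \<in> T' then (if k \<in> T \<and> k \<in> T' \<and> k \<in> A
       then level_gram v (g k) (g' k) * (if k \<in> D then -1 / (real v - 1) else 1) else 0) else 1)
      * level_pair_count v A D k"
  unfolding sum_level_pairs_fst_snd sum_coord_factor_prod[OF assms(1,2)] sum_coord_factor[OF assms(1)]
    sum_coord_factor[OF assms(2)] coord_factor_zero[OF assms(1)] coord_factor_zero[OF assms(2)]
  using assms(3) by (auto simp: level_gram_def level_pair_count_def field_simps)

lemma sum_assignments_diff_coord_prod:
  assumes v: "v \<ge> 2" and r: "r < nparams v K" and c: "c < nparams v K"
  shows "(\<Sum>z\<in>PiE {..<K} (level_pairs v A D). diff_coord v K r (profile_pair K z) * diff_coord v K c (profile_pair K z)) =
    (if coord_attrs v K r = coord_attrs v K c \<and> coord_attrs v K r \<subseteq> A then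
       2 * (\<Prod>k\<in>coord_attrs v K r. level_gram v (coord_level v K r k) (coord_level v K c k)) *
         (1 - (\<Prod>k\<in>coord_attrs v K r. if k \<in> D then -1 / (real v - 1) else 1)) * (\<Prod>k\<in>{..<K}. level_pair_count v A D k)
     else 0)"
proof -
  define Tr Tc where "Tr = coord_attrs v K r" and "Tc = coord_attrs v K c"
  define P where "P \<longleftrightarrow> Tr = Tc \<and> Tr \<subseteq> A"
  define hr hc where "hr = coord_factor v Tr (coord_level v K r)" and "hc = coord_factor v Tc (coord_level v K c)"
  have levels: "\<forall>k\<in>Tr. coord_level v K r k < v - 1" "\<forall>k\<in>Tc. coord_level v K c k < v - 1"
    using index_regvec(2)[OF r v] index_regvec(2)[OF c v] by (simp_all add: Tr_def Tc_def)
  have attrs: "Tr \<subseteq> {..<K}" "Tc \<subseteq> {..<K}"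
    using coord_attrs_subset[OF r v] coord_attrs_subset[OF c v] by (simp_all add: Tr_def Tc_def)
  have diff: "diff_coord v K r (profile_pair K z) = (\<Prod>k<K. hr k (fst (z k))) - (\<Prod>k<K. hr k (snd (z k)))"
    "diff_coord v K c (profile_pair K z) = (\<Prod>k<K. hc k (fst (z k))) - (\<Prod>k<K. hc k (snd (z k)))" for z
    unfolding diff_coord_def index_regvec_prod[OF r v] index_regvec_prod[OF c v] hr_def hc_def Tr_def Tc_def
    by (auto intro!: prod.cong arg_cong2[where f=minus] simp: nth_profile_pair)
  have "(\<Sum>z\<in>PiE {..<K} (level_pairs v A D). diff_coord v K r (profile_pair K z) * diff_coord v K c (profile_pair K z)) =
      2 * ((\<Prod>k<K. \<Sum>y\<in>level_pairs v A D k. hr k (fst y) * hc k (fst y)) -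
           (\<Prod>k<K. \<Sum>y\<in>level_pairs v A D k. hr k (fst y) * hc k (snd y)))"
    unfolding diff by (rule sum_PiE_product_differences) (auto simp: finite_level_pairs swap_level_pairs)
  also have "\<dots> = 2 * ((if P then \<Prod>k\<in>Tr. level_gram v (coord_level v K r k) (coord_level v K c k) else 0) -
      (if P then \<Prod>k\<in>Tr. level_gram v (coord_level v K r k) (coord_level v K c k) *
         (if k \<in> D then -1 / (real v - 1) else 1) else 0)) * (\<Prod>k<K. level_pair_count v A D k)"
    unfolding hr_def hc_def sum_level_pairs_coord_factor_fst_fst[OF levels v]
      sum_level_pairs_coord_factor_fst_snd[OF levels v] prod.distrib prod_if_union_inter[OF finite_lessThan attrs] P_def
    by (simp add: algebra_simps)
  also have "\<dots> = (if P then
       2 * (\<Prod>k\<in>Tr. level_gram v (coord_level v K r k) (coord_level v K c k)) *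
         (1 - (\<Prod>k\<in>Tr. if k \<in> D then -1 / (real v - 1) else 1)) * (\<Prod>k<K. level_pair_count v A D k)
     else 0)"
    by (cases P) (simp_all add: prod.distrib algebra_simps)
  finally show ?thesis unfolding P_def Tr_def Tc_def .
qed

lemma prod_level_pair_count: assumes "(A,D) \<in> supports K S d"
  shows "(\<Prod>k\<in>{..<K}. level_pair_count v A D k) = real v ^ S * (real v - 1) ^ d"
proof -
  have A: "A \<subseteq> {..<K}" "card A = S" "D \<subseteq> A" "card D = d" using assms by (auto simp: supports_def)
  have fA: "finite A" using A(1) finite_subset by blast
  have "(\<Prod>k\<in>{..<K}. level_pair_count v A D k) = (\<Prod>k\<in>A. real v * (if k \<in> D then real v - 1 else 1))"
    by (rule prod.mono_neutral_cong_right) (use A in \<open>auto simp: level_pair_count_def\<close>)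
  also have "\<dots> = real v ^ S * (real v - 1) ^ d"
    using fA A by (simp add: prod.distrib prod.If_cases Int_absorb1)
  finally show ?thesis .
qed

lemma card_depth_region:
  "real (card (depth_region v K S d)) = real (card (supports K S d)) * (real v ^ S * (real v - 1) ^ d)"
proof -
  have "real (card (depth_region v K S d)) =
      (\<Sum>ad\<in>supports K S d. real (card (PiE {..<K} (level_pairs v (fst ad) (snd ad)))))"
    using sum_depth_region[where g="\<lambda>_. 1::real"] by simp
  also have "\<dots> = (\<Sum>ad\<in>supports K S d. real v ^ S * (real v - 1) ^ d)"
    by (intro sum.cong refl)
      (auto simp: card_PiE of_nat_prod card_level_pairs prod_level_pair_count)
  finally show ?thesis by simp
qed

text \<open>\<open>depth_kernel v K S T d\<close> is the factor \<open>\<kappa>(T,d)\<close> by which averaging over the uniform design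
  of depth \<open>d\<close> scales the coordinates with attribute set \<open>T\<close>.\<close>
definition depth_kernel :: "nat \<Rightarrow> nat \<Rightarrow> nat \<Rightarrow> nat set \<Rightarrow> nat \<Rightarrow> real" where
  "depth_kernel v K S T d = 2 * (\<Sum>ad\<in>{ad\<in>supports K S d. T \<subseteq> fst ad}.
        1 - (\<Prod>k\<in>T. if k \<in> snd ad then -1 / (real v - 1) else 1)) / real (card (supports K S d))"

definition base_entry :: "nat \<Rightarrow> nat \<Rightarrow> nat \<Rightarrow> nat \<Rightarrow> real" where
  "base_entry v K r c = (if coord_attrs v K r = coord_attrs v K c
     then (\<Prod>k\<in>coord_attrs v K r. level_gram v (coord_level v K r k) (coord_level v K c k)) else 0)"

definition base_matrix :: "nat \<Rightarrow> nat \<Rightarrow> real mat" where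
  "base_matrix v K = mat (nparams v K) (nparams v K) (\<lambda>(r,c). base_entry v K r c)"

lemma avg_diff_coord_prod: assumes v: "v \<ge> 2" and r: "r < nparams v K" and c: "c < nparams v K"
  shows "(\<Sum>x\<in>depth_region v K S d. diff_coord v K r x * diff_coord v K c x) / real (card (depth_region v K S d)) =
     depth_kernel v K S (coord_attrs v K r) d * base_entry v K r c"
proof -
  define C where "C = real v ^ S * (real v - 1) ^ d"
  define T where "T = coord_attrs v K r"
  define G where "G = 2 * (\<Prod>k\<in>T. level_gram v (coord_level v K r k) (coord_level v K c k))"
  define sign where "sign D = 1 - (\<Prod>k\<in>T. if k \<in> D then -1 / (real v - 1) else 1)" for D
  have "C > 0" using v by (simp add: C_def)
  have "(\<Sum>x\<in>depth_region v K S d. diff_coord v K r x * diff_coord v K c x) =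
     (\<Sum>ad\<in>supports K S d. if T = coord_attrs v K c \<and> T \<subseteq> fst ad then G * sign (snd ad) * C else 0)"
    unfolding sum_depth_region
    by (intro sum.cong refl) (auto simp: sum_assignments_diff_coord_prod[OF v r c] prod_level_pair_count
        C_def G_def sign_def T_def)
  also have "\<dots> = (if T = coord_attrs v K c then G * C * (\<Sum>ad\<in>{ad\<in>supports K S d. T \<subseteq> fst ad}. sign (snd ad)) else 0)"
    by (auto simp: sum.inter_filter[symmetric] finite_supports sum_distrib_left intro!: sum.cong)
  finally show ?thesis
    unfolding card_depth_region depth_kernel_def base_entry_def T_def[symmetric] C_def[symmetric]
    using \<open>C > 0\<close> by (auto simp: field_simps G_def sign_def)
qed

definition invariant_design :: "nat \<Rightarrow> nat \<Rightarrow> nat \<Rightarrow> (nat \<Rightarrow> real) \<Rightarrow> nat list \<times> nat list \<Rightarrow> real" where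
  "invariant_design v K S w = (\<lambda>x. \<Sum>d=1..S. w d * uniform_depth_design v K S d x)"

definition depth_weight :: "nat \<Rightarrow> nat \<Rightarrow> nat \<Rightarrow> (nat \<Rightarrow> real) \<Rightarrow> nat set \<Rightarrow> real" where
  "depth_weight v K S w T = (\<Sum>d=1..S. w d * depth_kernel v K S T d)"

lemma finite_profiles: "finite (profiles v K)"
proof -
  have "profiles v K = {xs. set xs \<subseteq> {0..v} \<and> length xs = K}" by (auto simp: profiles_def)
  thus ?thesis by (simp add: finite_lists_length_eq)
qed

lemma finite_design_region: "finite (design_region v K S)"
proof -
  have "design_region v K S \<subseteq> profiles v K \<times> profiles v K" by (auto simp: design_region_def)
  thus ?thesis using finite_profiles by (meson finite_SigmaI finite_subset)
qed

lemma depth_region_subset: "depth_region v K S d \<subseteq> design_region v K S"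
  by (auto simp: depth_region_def)

lemma sum_uniform_depth_design: "(\<Sum>x\<in>design_region v K S. uniform_depth_design v K S d x * g x) =
   (\<Sum>x\<in>depth_region v K S d. g x) / real (card (depth_region v K S d))"
proof -
  have "(\<Sum>x\<in>design_region v K S. uniform_depth_design v K S d x * g x) =
      (\<Sum>x\<in>depth_region v K S d. uniform_depth_design v K S d x * g x)"
    by (rule sum.mono_neutral_right[OF finite_design_region depth_region_subset]) (auto simp: uniform_depth_design_def)
  also have "\<dots> = (\<Sum>x\<in>depth_region v K S d. g x / real (card (depth_region v K S d)))"
    by (intro sum.cong refl) (simp add: uniform_depth_design_def)
  finally show ?thesis by (simp add: sum_divide_distrib)
qed

lemma dim_info_matrix [simp]:
  "dim_row (info_matrix v K S \<xi>) = nparams v K" "dim_col (info_matrix v K S \<xi>) = nparams v K"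
  by (simp_all add: info_matrix_def)

lemma index_info_matrix_invariant_design:
  assumes v: "v \<ge> 2" and r: "r < nparams v K" and c: "c < nparams v K"
  shows "info_matrix v K S (invariant_design v K S w) $$ (r,c) =
     depth_weight v K S w (coord_attrs v K r) * base_entry v K r c"
proof -
  have "info_matrix v K S (invariant_design v K S w) $$ (r,c) =
     (\<Sum>x\<in>design_region v K S. (\<Sum>d=1..S. w d * uniform_depth_design v K S d x) * diff_coord v K r x * diff_coord v K c x)"
    using r c by (simp add: info_matrix_def invariant_design_def diff_coord_def dim_regvec)
  also have "\<dots> = (\<Sum>d=1..S. w d * (\<Sum>x\<in>design_region v K S. uniform_depth_design v K S d x * (diff_coord v K r x * diff_coord v K c x)))"
    by (simp add: sum_distrib_left sum_distrib_right algebra_simps, rule sum.swap)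
  also have "\<dots> = depth_weight v K S w (coord_attrs v K r) * base_entry v K r c"
    unfolding sum_uniform_depth_design avg_diff_coord_prod[OF v r c]
    by (simp add: depth_weight_def sum_distrib_right mult.assoc)
  finally show ?thesis .
qed

lemma det_scale_rows:
  fixes A :: "'a :: comm_ring_1 mat"
  assumes "A \<in> carrier_mat n n"
  shows "det (mat n n (\<lambda>(i,j). a i * A $$ (i,j))) = (\<Prod>i<n. a i) * det A"
proof -
  define D where "D = mat n n (\<lambda>(i,j). if i = j then a i else 0)"
  have "mat n n (\<lambda>(i,j). a i * A $$ (i,j)) = D * A"
    using assms by (intro eq_matI) (auto simp: D_def scalar_prod_def if_distrib[of "\<lambda>x. x * _"] sum.delta cong: if_cong)
  moreover have "det D = (\<Prod>i<n. a i)"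
    by (subst det_upper_triangular[of _ n]) (auto simp: D_def prod_list_diag_prod atLeast0LessThan intro!: prod.cong)
  moreover have "D \<in> carrier_mat n n" by (simp add: D_def)
  ultimately show ?thesis using det_mult[of D n A] assms by (simp add: D_def)
qed

lemma det_info_matrix_invariant_design: assumes v: "v \<ge> 2"
  shows "det (info_matrix v K S (invariant_design v K S w)) =
    (\<Prod>r<nparams v K. depth_weight v K S w (coord_attrs v K r)) * det (base_matrix v K)"
proof -
  have "info_matrix v K S (invariant_design v K S w) =
      mat (nparams v K) (nparams v K) (\<lambda>(r,c). depth_weight v K S w (coord_attrs v K r) * base_matrix v K $$ (r,c))"
    by (intro eq_matI) (auto simp: index_info_matrix_invariant_design[OF v] base_matrix_def)
  then show ?thesis by (simp add: det_scale_rows base_matrix_def)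
qed

section \<open>The depth kernel is a cubic in the depth\<close>

definition falling_fact :: "real \<Rightarrow> nat \<Rightarrow> real" where "falling_fact x u = (\<Prod>i<u. x - real i)"

lemma falling_fact_Suc: "falling_fact x (Suc u) = falling_fact x u * (x - real u)" by (simp add: falling_fact_def)

lemma falling_fact_of_nat_less: "d < u \<Longrightarrow> falling_fact (real d) u = 0"
  unfolding falling_fact_def by (intro prod_zero) (auto intro!: bexI[of _ d])

lemma falling_fact_pos: "u \<le> S \<Longrightarrow> falling_fact (real S) u > 0"
  unfolding falling_fact_def by (rule prod_pos) auto

lemma choose_mult_falling_fact: "u \<le> d \<Longrightarrow> d \<le> S \<Longrightarrow>
  real ((S - u) choose (d - u)) * falling_fact (real S) u = real (S choose d) * falling_fact (real d) u"
proof (induction u)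
  case 0 thus ?case by (simp add: falling_fact_def)
next
  case (Suc u)
  have IH: "real ((S - u) choose (d - u)) * falling_fact (real S) u = real (S choose d) * falling_fact (real d) u"
    using Suc by simp
  obtain m where m: "S - u = Suc m" using Suc.prems by (metis Suc_diff_Suc le_less_trans lessI less_le_trans)
  obtain j where j: "d - u = Suc j" using Suc.prems by (metis Suc_diff_le Suc_le_lessD diff_Suc_Suc)
  have m2: "S - Suc u = m" "d - Suc u = j" using m j by auto
  have Sm: "S = u + Suc m" "d = u + Suc j" using m j Suc.prems by arith+
  have key: "real (Suc m) * real (m choose j) = real (Suc m choose Suc j) * real (Suc j)"
    using Suc_times_binomial_eq[of m j] by (metis of_nat_mult)
  have "real ((S - Suc u) choose (d - Suc u)) * falling_fact (real S) (Suc u)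
      = real (m choose j) * (real (Suc m)) * falling_fact (real S) u"
    using Sm by (simp add: m2 falling_fact_Suc)
  also have "\<dots> = real ((S - u) choose (d - u)) * real (Suc j) * falling_fact (real S) u"
    using key m j by (simp add: algebra_simps)
  also have "\<dots> = real (S choose d) * falling_fact (real d) u * real (Suc j)" using IH by (simp add: algebra_simps)
  also have "\<dots> = real (S choose d) * falling_fact (real d) (Suc u)"
    using Sm by (simp add: falling_fact_Suc)
  finally show ?case .
qed

lemma card_supersets_with_card: assumes "finite A" "U \<subseteq> A"
  shows "card {D. D \<subseteq> A \<and> card D = d \<and> U \<subseteq> D} =
    (if card U \<le> d then (card A - card U) choose (d - card U) else 0)"
proof (cases "card U \<le> d")
  case False
  have e: "{D. D \<subseteq> A \<and> card D = d \<and> U \<subseteq> D} = {}"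
  proof (rule ccontr)
    assume "{D. D \<subseteq> A \<and> card D = d \<and> U \<subseteq> D} \<noteq> {}"
    then obtain D where "D \<subseteq> A" "card D = d" "U \<subseteq> D" by blast
    hence "card U \<le> d" using assms card_mono[of D U] finite_subset by blast
    thus False using False by simp
  qed
  show ?thesis unfolding e using False by simp
next
  case True
  have fU: "finite U" using assms finite_subset by blast
  have bij: "bij_betw (\<lambda>E. E \<union> U) {E. E \<subseteq> A - U \<and> card E = d - card U} {D. D \<subseteq> A \<and> card D = d \<and> U \<subseteq> D}"
  proof (rule bij_betwI[where g="\<lambda>D. D - U"])
    show "(\<lambda>E. E \<union> U) \<in> {E. E \<subseteq> A - U \<and> card E = d - card U} \<rightarrow> {D. D \<subseteq> A \<and> card D = d \<and> U \<subseteq> D}"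
    proof
      fix E assume E: "E \<in> {E. E \<subseteq> A - U \<and> card E = d - card U}"
      have fE: "finite E" using E assms finite_subset by blast
      have "card (E \<union> U) = card E + card U" using E fE fU by (subst card_Un_disjoint) auto
      thus "E \<union> U \<in> {D. D \<subseteq> A \<and> card D = d \<and> U \<subseteq> D}" using E assms True by auto
    qed
    show "(\<lambda>D. D - U) \<in> {D. D \<subseteq> A \<and> card D = d \<and> U \<subseteq> D} \<rightarrow> {E. E \<subseteq> A - U \<and> card E = d - card U}"
    proof
      fix D assume D: "D \<in> {D. D \<subseteq> A \<and> card D = d \<and> U \<subseteq> D}"
      have "finite D" using D assms finite_subset by blast
      thus "D - U \<in> {E. E \<subseteq> A - U \<and> card E = d - card U}" using D by (auto simp: card_Diff_subset fU)
    qed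
  qed auto
  have "card {D. D \<subseteq> A \<and> card D = d \<and> U \<subseteq> D} = card {E. E \<subseteq> A - U \<and> card E = d - card U}"
    using bij_betw_same_card[OF bij] by simp
  also have "\<dots> = card (A - U) choose (d - card U)" using assms by (simp add: n_subsets)
  finally show ?thesis using True assms by (simp add: card_Diff_subset fU)
qed

definition depth_poly :: "nat \<Rightarrow> nat \<Rightarrow> nat set \<Rightarrow> real \<Rightarrow> real" where
  "depth_poly v S T x = - (\<Sum>U\<in>Pow T - {{}}.
     (-1 / (real v - 1) - 1) ^ card U * falling_fact x (card U) / falling_fact (real S) (card U))"

lemma prod_if_eq_sum_subsets: assumes "finite T"
  shows "(\<Prod>k\<in>T. if k \<in> D then q else 1) = (\<Sum>U\<in>Pow T. if U \<subseteq> D then (q - 1) ^ card U else (0::real))"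
proof -
  have "(\<Prod>k\<in>T. if k \<in> D then q else 1) = (\<Prod>k\<in>T. (if k \<in> D then q - 1 else 0) + 1)"
    by (intro prod.cong refl) auto
  also have "\<dots> = (\<Sum>U\<in>Pow T. (\<Prod>k\<in>U. if k \<in> D then q - 1 else 0) * (\<Prod>k\<in>T - U. 1))"
    by (rule prod_add[OF assms])
  also have "\<dots> = (\<Sum>U\<in>Pow T. if U \<subseteq> D then (q - 1) ^ card U else 0)"
  proof (intro sum.cong refl)
    fix U assume "U \<in> Pow T"
    show "(\<Prod>k\<in>U. if k \<in> D then q - 1 else 0) * (\<Prod>k\<in>T - U. 1) = (if U \<subseteq> D then (q - 1) ^ card U else 0)"
    proof (cases "U \<subseteq> D")
      case True thus ?thesis by (simp add: subset_iff)
    next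
      case False then obtain k where "k \<in> U" "k \<notin> D" by blast
      moreover have "finite U" using \<open>U \<in> Pow T\<close> assms finite_subset by blast
      ultimately show ?thesis using False by (auto intro: prod_zero)
    qed
  qed
  finally show ?thesis .
qed

lemma card_supersets_eq_falling_fact:
  assumes "finite A" "card A = S" "U \<subseteq> A" "d \<le> S"
  shows "real (card {D. D \<subseteq> A \<and> card D = d \<and> U \<subseteq> D}) =
    real (S choose d) * falling_fact (real d) (card U) / falling_fact (real S) (card U)"
proof (cases "card U \<le> d")
  case True
  have "falling_fact (real S) (card U) > 0"
    using card_mono[OF assms(1,3)] assms(2) by (intro falling_fact_pos) simp
  then show ?thesis
    using card_supersets_with_card[OF assms(1,3)] choose_mult_falling_fact[OF True assms(4)] True assms(2)
    by (simp add: field_simps)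
next
  case False
  then show ?thesis using card_supersets_with_card[OF assms(1,3)] falling_fact_of_nat_less[of d "card U"] by simp
qed

lemma sum_subsets_depth_poly: assumes "finite A" "card A = S" "T \<subseteq> A" "d \<le> S"
  shows "(\<Sum>D\<in>{D. D \<subseteq> A \<and> card D = d}. 1 - (\<Prod>k\<in>T. if k \<in> D then -1 / (real v - 1) else 1))
     = real (S choose d) * depth_poly v S T (real d)"
proof -
  define q where "q = -1 / (real v - 1)"
  define DD where "DD = {D. D \<subseteq> A \<and> card D = d}"
  define ratio where "ratio U = falling_fact (real d) (card U) / falling_fact (real S) (card U)" for U :: "nat set"
  have fT: "finite T" using assms finite_subset by blast
  have fDD: "finite DD" unfolding DD_def using assms(1) by simp
  have cDD: "card DD = S choose d" unfolding DD_def using assms by (simp add: n_subsets)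
  have supersets: "(\<Sum>D\<in>DD. if U \<subseteq> D then (1::real) else 0) = real (S choose d) * ratio U" if "U \<subseteq> T" for U
  proof -
    have "(\<Sum>D\<in>DD. if U \<subseteq> D then (1::real) else 0) = real (card {D. D \<subseteq> A \<and> card D = d \<and> U \<subseteq> D})"
      using fDD by (simp add: sum.If_cases Int_def DD_def conj_ac)
    then show ?thesis
      using card_supersets_eq_falling_fact[OF assms(1,2) _ assms(4), of U] that assms(3) by (simp add: ratio_def)
  qed
  have "(\<Sum>D\<in>DD. 1 - (\<Prod>k\<in>T. if k \<in> D then q else 1))
      = real (card DD) - (\<Sum>D\<in>DD. \<Sum>U\<in>Pow T. if U \<subseteq> D then (q - 1) ^ card U else 0)"
    by (simp add: sum_subtractf prod_if_eq_sum_subsets[OF fT])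
  also have "(\<Sum>D\<in>DD. \<Sum>U\<in>Pow T. if U \<subseteq> D then (q - 1) ^ card U else 0)
      = (\<Sum>U\<in>Pow T. (q - 1) ^ card U * (\<Sum>D\<in>DD. if U \<subseteq> D then 1 else 0))"
    by (subst sum.swap) (simp add: sum_distrib_left if_distrib cong: if_cong)
  also have "\<dots> = (\<Sum>U\<in>Pow T. (q - 1) ^ card U * (real (S choose d) * ratio U))"
    by (intro sum.cong refl) (simp add: supersets)
  also have "\<dots> = real (S choose d) + (\<Sum>U\<in>Pow T - {{}}. (q - 1) ^ card U * (real (S choose d) * ratio U))"
    using fT by (subst sum.remove[of _ "{}"]) (auto simp: ratio_def falling_fact_def)
  finally show ?thesis unfolding DD_def[symmetric] q_def[symmetric] depth_poly_def cDD ratio_def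
    by (simp add: sum_distrib_left algebra_simps)
qed

definition attr_sets :: "nat \<Rightarrow> nat \<Rightarrow> nat set set" where
  "attr_sets K S = {A. A \<subseteq> {..<K} \<and> card A = S}"

lemma finite_attr_sets: "finite (attr_sets K S)"
  by (rule finite_subset[of _ "Pow {..<K}"]) (auto simp: attr_sets_def)

lemma supports_eq_Sigma: "supports K S d = Sigma (attr_sets K S) (\<lambda>A. {D. D \<subseteq> A \<and> card D = d})"
  by (auto simp: supports_def attr_sets_def)

lemma supports_containing_eq_Sigma:
  "{ad\<in>supports K S d. T \<subseteq> fst ad} = Sigma {A\<in>attr_sets K S. T \<subseteq> A} (\<lambda>A. {D. D \<subseteq> A \<and> card D = d})"
  by (auto simp: supports_def attr_sets_def)

lemma card_supports: "real (card (supports K S d)) = real (card (attr_sets K S)) * real (S choose d)"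
proof -
  have fin: "finite A" if "A \<in> attr_sets K S" for A
    using that finite_subset[of A "{..<K}"] by (auto simp: attr_sets_def)
  have "card (supports K S d) = (\<Sum>A\<in>attr_sets K S. card {D. D \<subseteq> A \<and> card D = d})"
    unfolding supports_eq_Sigma by (rule card_SigmaI) (auto simp: finite_attr_sets fin)
  also have "\<dots> = (\<Sum>A\<in>attr_sets K S. S choose d)"
    using fin by (intro sum.cong refl) (simp add: n_subsets attr_sets_def)
  finally show ?thesis by simp
qed

lemma depth_kernel_eq_poly: assumes "d \<le> S"
  shows "depth_kernel v K S T d =
    2 * real (card {A\<in>attr_sets K S. T \<subseteq> A}) / real (card (attr_sets K S)) * depth_poly v S T (real d)"
proof -
  have fin: "finite A" if "A \<in> attr_sets K S" for A
    using that finite_subset[of A "{..<K}"] by (auto simp: attr_sets_def)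
  have "(\<Sum>ad\<in>{ad\<in>supports K S d. T \<subseteq> fst ad}. 1 - (\<Prod>k\<in>T. if k \<in> snd ad then -1 / (real v - 1) else 1))
     = (\<Sum>A\<in>{A\<in>attr_sets K S. T \<subseteq> A}. \<Sum>D\<in>{D. D \<subseteq> A \<and> card D = d}.
          1 - (\<Prod>k\<in>T. if k \<in> D then -1 / (real v - 1) else 1))"
    unfolding supports_containing_eq_Sigma by (subst sum.Sigma) (auto simp: finite_attr_sets fin split_def)
  also have "\<dots> = (\<Sum>A\<in>{A\<in>attr_sets K S. T \<subseteq> A}. real (S choose d) * depth_poly v S T (real d))"
    using fin assms by (intro sum.cong refl sum_subsets_depth_poly) (auto simp: attr_sets_def)
  finally show ?thesis
    using assms unfolding depth_kernel_def card_supports by (simp add: field_simps)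
qed

definition cubic_through_origin :: "(real \<Rightarrow> real) \<Rightarrow> bool" where
  "cubic_through_origin f \<longleftrightarrow> (\<exists>a b c. \<forall>x. f x = a * x + b * x^2 + c * x^3)"

lemma cubic_through_origin_add:
  "cubic_through_origin f \<Longrightarrow> cubic_through_origin g \<Longrightarrow> cubic_through_origin (\<lambda>x. f x + g x)"
  unfolding cubic_through_origin_def
proof (elim exE)
  fix a b c a' b' c' assume "\<forall>x. f x = a * x + b * x^2 + c * x^3" "\<forall>x. g x = a' * x + b' * x^2 + c' * x^3"
  thus "\<exists>a b c. \<forall>x. f x + g x = a * x + b * x^2 + c * x^3"
    by (intro exI[of _ "a+a'"] exI[of _ "b+b'"] exI[of _ "c+c'"]) (simp add: algebra_simps)
qed

lemma cubic_through_origin_scale: "cubic_through_origin f \<Longrightarrow> cubic_through_origin (\<lambda>x. k * f x)"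
  unfolding cubic_through_origin_def
proof (elim exE)
  fix a b c assume "\<forall>x. f x = a * x + b * x^2 + c * x^3"
  thus "\<exists>a b c. \<forall>x. k * f x = a * x + b * x^2 + c * x^3"
    by (intro exI[of _ "k*a"] exI[of _ "k*b"] exI[of _ "k*c"]) (simp add: algebra_simps)
qed

lemma cubic_through_origin_zero: "cubic_through_origin (\<lambda>x. 0)"
  unfolding cubic_through_origin_def by (intro exI[of _ 0]) simp

lemma cubic_through_origin_sum:
  "finite I \<Longrightarrow> (\<And>i. i \<in> I \<Longrightarrow> cubic_through_origin (f i)) \<Longrightarrow> cubic_through_origin (\<lambda>x. \<Sum>i\<in>I. f i x)"
  by (induction I rule: finite_induct) (auto intro: cubic_through_origin_add cubic_through_origin_zero)

lemma cubic_through_origin_falling_fact: assumes "1 \<le> u" "u \<le> 3" shows "cubic_through_origin (\<lambda>x. falling_fact x u)"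
proof -
  have "u = 1 \<or> u = 2 \<or> u = 3" using assms by auto
  thus ?thesis
  proof (elim disjE)
    assume "u = 1" thus ?thesis unfolding cubic_through_origin_def falling_fact_def by (intro exI[of _ 1] exI[of _ 0]) simp
  next
    assume "u = 2" thus ?thesis unfolding cubic_through_origin_def falling_fact_def
      by (intro exI[of _ "-1"] exI[of _ 1] exI[of _ 0]) (simp add: numeral_2_eq_2 power2_eq_square algebra_simps)
  next
    assume "u = 3" thus ?thesis unfolding cubic_through_origin_def falling_fact_def
      by (intro exI[of _ 2] exI[of _ "-3"] exI[of _ 1]) (simp add: numeral_3_eq_3 power2_eq_square power3_eq_cube algebra_simps)
  qed
qed

lemma cubic_through_origin_depth_poly:
  assumes "finite T" "card T \<le> 3" shows "cubic_through_origin (depth_poly v S T)"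
proof -
  define coeff where "coeff U = (-1 / (real v - 1) - 1) ^ card U / falling_fact (real S) (card U)" for U :: "nat set"
  have "depth_poly v S T = (\<lambda>x. -1 * (\<Sum>U\<in>Pow T - {{}}. coeff U * falling_fact x (card U)))"
    unfolding depth_poly_def coeff_def by (auto simp: field_simps)
  moreover have "cubic_through_origin (\<lambda>x. \<Sum>U\<in>Pow T - {{}}. coeff U * falling_fact x (card U))"
  proof (rule cubic_through_origin_sum)
    fix U assume "U \<in> Pow T - {{}}"
    then have "1 \<le> card U" "card U \<le> 3"
      using assms card_mono[of T U] finite_subset[of U T] by (auto simp: Suc_le_eq card_gt_0_iff)
    then show "cubic_through_origin (\<lambda>x. coeff U * falling_fact x (card U))"
      by (intro cubic_through_origin_scale cubic_through_origin_falling_fact)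
  qed (use assms in simp)
  ultimately show ?thesis using cubic_through_origin_scale[of _ "-1"] by simp
qed

section \<open>The equivalence condition for optimal invariant designs\<close>

lemma cubic_eq_mult_of_two_roots:
  fixes c0 c1 c2 c3 a b :: real
  assumes "a \<noteq> b" and "c0 + c1 * a + c2 * a^2 + c3 * a^3 = 0" and "c0 + c1 * b + c2 * b^2 + c3 * b^3 = 0"
  shows "\<exists>e. \<forall>x. c0 + c1 * x + c2 * x^2 + c3 * x^3 = (x - a) * (x - b) * (c3 * x + e)"
proof -
  define e where "e = c2 + c3 * (a + b)"
  define u1 where "u1 = c1 - a * b * c3 + (a + b) * e"
  define u0 where "u0 = c0 - a * b * e"
  have rem: "c0 + c1 * x + c2 * x^2 + c3 * x^3 = (x - a) * (x - b) * (c3 * x + e) + (u0 + u1 * x)" for x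
    by (simp add: e_def u0_def u1_def algebra_simps power2_eq_square power3_eq_cube)
  have roots: "u0 + u1 * a = 0" "u0 + u1 * b = 0" using rem[of a] rem[of b] assms(2,3) by simp_all
  moreover have "u1 * (b - a) = (u0 + u1 * b) - (u0 + u1 * a)" by (simp add: algebra_simps)
  ultimately have "u1 * (b - a) = 0" by simp
  then have "u1 = 0" "u0 = 0" using assms(1) roots by simp_all
  then show ?thesis using rem by auto
qed

text \<open>Between two roots \<open>a + 2 \<le> b\<close> the cubic is negative at \<open>a + 1\<close> and \<open>b - 1\<close>, outside them at
  \<open>a - 1\<close> and \<open>b + 1\<close>; this forces the linear cofactor to vanish, and then \<open>c0 = 0\<close>.\<close>
lemma cubic_no_distant_roots:
  fixes c0 c1 c2 c3 :: real and a b S :: nat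
  assumes c0: "c0 < 0"
    and le: "\<And>n::nat. 1 \<le> n \<Longrightarrow> n \<le> S \<Longrightarrow> c0 + c1 * real n + c2 * (real n)^2 + c3 * (real n)^3 \<le> 0"
    and ab: "1 \<le> a" "a + 2 \<le> b" "b + 1 \<le> S"
    and fa: "c0 + c1 * real a + c2 * (real a)^2 + c3 * (real a)^3 = 0"
    and fb: "c0 + c1 * real b + c2 * (real b)^2 + c3 * (real b)^3 = 0"
  shows False
proof -
  define f where "f x = c0 + c1 * x + c2 * x^2 + c3 * x^3" for x :: real
  obtain e where F: "\<And>x. f x = (x - a) * (x - b) * (c3 * x + e)"
    using cubic_eq_mult_of_two_roots[OF _ fa fb] ab unfolding f_def by force
  have fle: "f (real n) \<le> 0" if "n \<le> S" for n
    using le[of n] that c0 by (cases "n = 0") (auto simp: f_def)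
  have "f (real a - 1) \<le> 0" "f (real a + 1) \<le> 0" "f (real b - 1) \<le> 0" "f (real b + 1) \<le> 0"
    using fle[of "a - 1"] fle[of "a + 1"] fle[of "b - 1"] fle[of "b + 1"] ab by (simp_all add: of_nat_diff add.commute)
  then have g: "c3 * (real a - 1) + e \<le> 0" "0 \<le> c3 * (real a + 1) + e"
    "0 \<le> c3 * (real b - 1) + e" "c3 * (real b + 1) + e \<le> 0"
    using ab by (auto simp: F mult_le_0_iff zero_le_mult_iff)
  then have "c3 = 0" by (simp add: algebra_simps)
  with g have "e = 0" by simp
  then show False using F[of 0] c0 by (simp add: f_def)
qed

lemma sum_ratio_le_card_if_prod_max:
  fixes m k :: "'i \<Rightarrow> real"
  assumes mpos: "\<And>r. r \<in> I \<Longrightarrow> m r > 0"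
    and opt: "\<And>\<epsilon>. 0 < \<epsilon> \<Longrightarrow> \<epsilon> < 1 \<Longrightarrow> (\<Prod>r\<in>I. m r + \<epsilon> * (k r - m r)) \<le> (\<Prod>r\<in>I. m r)"
  shows "(\<Sum>r\<in>I. k r / m r) \<le> real (card I)"
proof (rule ccontr)
  assume gt: "\<not> (\<Sum>r\<in>I. k r / m r) \<le> real (card I)"
  define P where "P u = (\<Prod>r\<in>I. m r + u * (k r - m r))" for u
  have "(P has_field_derivative (P 0 * (\<Sum>r\<in>I. (k r - m r) / (m r + 0 * (k r - m r))))) (at 0)"
    unfolding P_def
  proof (rule has_field_derivative_prod'[where f="\<lambda>r u. m r + u * (k r - m r)"])
    show "((\<lambda>u. m r + u * (k r - m r)) has_field_derivative (k r - m r)) (at 0)" for r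
      by (auto intro!: derivative_eq_intros)
    show "m r + 0 * (k r - m r) \<noteq> 0" if "r \<in> I" for r
      using mpos[OF that] by simp
  qed
  moreover have "(\<Sum>r\<in>I. (k r - m r) / (m r + 0 * (k r - m r))) = (\<Sum>r\<in>I. k r / m r - 1)"
  proof (rule sum.cong[OF refl])
    fix r assume "r \<in> I"
    then have "m r \<noteq> 0" using mpos by force
    then show "(k r - m r) / (m r + 0 * (k r - m r)) = k r / m r - 1" by (simp add: field_simps)
  qed
  moreover have "P 0 > 0" unfolding P_def using mpos by (simp add: prod_pos)
  ultimately have "(P has_field_derivative (P 0 * ((\<Sum>r\<in>I. k r / m r) - real (card I)))) (at 0)"
    and "P 0 * ((\<Sum>r\<in>I. k r / m r) - real (card I)) > 0"
    using gt by (simp_all add: sum_subtractf)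
  then obtain \<delta> where "\<delta> > 0" and inc: "\<And>h. h > 0 \<Longrightarrow> h < \<delta> \<Longrightarrow> P 0 < P (0 + h)"
    by (rule DERIV_pos_inc_right[elim_format]) blast
  define h where "h = min (\<delta>/2) (1/2)"
  have "h > 0" "h < \<delta>" "h < 1" using \<open>\<delta> > 0\<close> by (auto simp: h_def)
  then show False using inc[of h] opt[of h] by (simp add: P_def)
qed

lemma weighted_mean_eq_bound:
  fixes w h :: "'i \<Rightarrow> real"
  assumes "finite I" and "\<forall>i\<in>I. w i \<ge> 0" and "(\<Sum>i\<in>I. w i) = 1"
    and "\<forall>i\<in>I. h i \<le> c" and "(\<Sum>i\<in>I. w i * h i) = c" and "i \<in> I" and "w i > 0"
  shows "h i = c"
proof -
  have "(\<Sum>j\<in>I. w j * (c - h j)) = 0"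
    using assms(3,5) by (simp add: right_diff_distrib sum_subtractf flip: sum_distrib_right)
  then have "w i * (c - h i) = 0"
    using assms(1,2,4,6) sum_nonneg_eq_0_iff[of I "\<lambda>j. w j * (c - h j)"] by simp
  then show ?thesis using assms(7) by simp
qed

lemma depth_kernel_nonneg: assumes "v \<ge> 2" shows "depth_kernel v K S T d \<ge> 0"
proof -
  have "(\<Prod>k\<in>T. if k \<in> D then -1 / (real v - 1) else 1) \<le> 1" for D
  proof -
    have "\<bar>\<Prod>k\<in>T. if k \<in> D then -1 / (real v - 1) else (1::real)\<bar> \<le> 1"
      unfolding abs_prod using assms by (intro prod_le_1) auto
    then show ?thesis by linarith
  qed
  then show ?thesis unfolding depth_kernel_def by (intro divide_nonneg_nonneg mult_nonneg_nonneg sum_nonneg) auto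
qed

lemma card_depth_region_pos: assumes "v \<ge> 2" "d \<le> S" "S \<le> K"
  shows "real (card (depth_region v K S d)) > 0"
proof -
  have "({..<S}, {..<d}) \<in> supports K S d" using assms by (auto simp: supports_def)
  then have "card (supports K S d) > 0" using finite_supports card_gt_0_iff by blast
  then show ?thesis unfolding card_depth_region using assms(1) by simp
qed

lemma is_design_invariant_design:
  assumes "v \<ge> 2" "S \<le> K" "\<forall>d\<in>{1..S}. w d \<ge> 0" "(\<Sum>d=1..S. w d) = 1"
  shows "is_design v K S (invariant_design v K S w)"
proof -
  have "(\<Sum>x\<in>design_region v K S. uniform_depth_design v K S d x) = 1" if "d \<in> {1..S}" for d
    using sum_uniform_depth_design[where g="\<lambda>_. 1"] card_depth_region_pos[of v d S K] assms that by simp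
  then have "(\<Sum>x\<in>design_region v K S. invariant_design v K S w x) = (\<Sum>d=1..S. w d)"
    unfolding invariant_design_def by (subst sum.swap) (simp add: flip: sum_distrib_left)
  moreover have "invariant_design v K S w x = 0" if "x \<notin> design_region v K S" for x
  proof -
    have "x \<notin> depth_region v K S d" for d using that depth_region_subset by blast
    then show ?thesis unfolding invariant_design_def by (simp add: uniform_depth_design_def)
  qed
  moreover have "invariant_design v K S w x \<ge> 0" for x
    unfolding invariant_design_def using assms(3)
    by (intro sum_nonneg mult_nonneg_nonneg) (auto simp: uniform_depth_design_def)
  ultimately show ?thesis using assms(4) unfolding is_design_def by auto
qed

lemma nparams_pos: "v \<ge> 2 \<Longrightarrow> K \<ge> 1 \<Longrightarrow> nparams v K > 0"
  by (simp add: nparams_def)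

lemma singular_design_exists: assumes "v \<ge> 2" and "S \<le> K" and "1 \<le> K"
  shows "\<exists>\<eta>. is_design v K S \<eta> \<and> det (info_matrix v K S \<eta>) = 0"
proof -
  define i0 where "i0 = map (\<lambda>k. if k < S then 1 else (0::nat)) [0..<K]"
  define \<eta> where "\<eta> x = (if x = (i0, i0) then (1::real) else 0)" for x
  have "(i0, i0) \<in> design_region v K S"
    unfolding design_region_def using assms by (auto simp: profiles_def i0_def intro!: exI[of _ "{..<S}"])
  then have "is_design v K S \<eta>" unfolding is_design_def \<eta>_def using finite_design_region
    by (auto simp: sum.delta)
  moreover have "info_matrix v K S \<eta> = 0\<^sub>m (nparams v K) (nparams v K)"
    by (rule eq_matI) (auto simp: info_matrix_def \<eta>_def dim_regvec intro!: sum.neutral)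
  moreover have "nparams v K > 0" using assms(1,3) by (rule nparams_pos)
  ultimately show ?thesis by (metis det_zero)
qed

definition sensitivity :: "nat \<Rightarrow> nat \<Rightarrow> nat \<Rightarrow> (nat \<Rightarrow> real) \<Rightarrow> nat \<Rightarrow> real" where
  "sensitivity v K S w d =
     (\<Sum>r<nparams v K. depth_kernel v K S (coord_attrs v K r) d / depth_weight v K S w (coord_attrs v K r))"

lemma sensitivity_cubic:
  assumes "v \<ge> 2"
  shows "\<exists>c1 c2 c3. \<forall>d \<le> S. sensitivity v K S w d = c1 * real d + c2 * (real d)^2 + c3 * (real d)^3"
proof -
  define c where "c r = 2 * real (card {A\<in>attr_sets K S. coord_attrs v K r \<subseteq> A}) / real (card (attr_sets K S))
    / depth_weight v K S w (coord_attrs v K r)" for r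
  have "cubic_through_origin (\<lambda>x. \<Sum>r<nparams v K. c r * depth_poly v S (coord_attrs v K r) x)"
  proof (rule cubic_through_origin_sum)
    fix r assume "r \<in> {..<nparams v K}"
    then show "cubic_through_origin (\<lambda>x. c r * depth_poly v S (coord_attrs v K r) x)"
      using card_coord_attrs[OF _ assms, of r K]
      by (intro cubic_through_origin_scale cubic_through_origin_depth_poly) (auto simp: coord_attrs_def)
  qed simp
  then obtain c1 c2 c3 where
    "\<forall>x. (\<Sum>r<nparams v K. c r * depth_poly v S (coord_attrs v K r) x) = c1 * x + c2 * x^2 + c3 * x^3"
    unfolding cubic_through_origin_def by blast
  moreover have "sensitivity v K S w d = (\<Sum>r<nparams v K. c r * depth_poly v S (coord_attrs v K r) (real d))"
    if "d \<le> S" for d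
    unfolding sensitivity_def c_def using that by (simp add: depth_kernel_eq_poly)
  ultimately show ?thesis by auto
qed

locale optimal_invariant_design =
  fixes v K S :: nat and w :: "nat \<Rightarrow> real"
  assumes v: "v \<ge> 2" and S_pos: "1 \<le> S" and S_le_K: "S \<le> K"
    and w_nonneg: "\<forall>d\<in>{1..S}. w d \<ge> 0" and w_sum: "(\<Sum>d=1..S. w d) = 1"
    and optimal: "D_optimal v K S (invariant_design v K S w)"
begin

lemma det_info_matrix_nonneg: "det (info_matrix v K S (invariant_design v K S w)) \<ge> 0"
proof -
  obtain \<eta> where "is_design v K S \<eta>" "det (info_matrix v K S \<eta>) = 0"
    using singular_design_exists[OF v S_le_K] S_pos S_le_K by auto
  then have "det (info_matrix v K S \<eta>) \<le> det (info_matrix v K S (invariant_design v K S w))"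
    using optimal unfolding D_optimal_def by blast
  with \<open>det (info_matrix v K S \<eta>) = 0\<close> show ?thesis by simp
qed

lemma depth_weight_pos: "r < nparams v K \<Longrightarrow> depth_weight v K S w (coord_attrs v K r) > 0"
  and det_base_matrix_pos: "det (base_matrix v K) > 0"
proof -
  define m where "m r = depth_weight v K S w (coord_attrs v K r)" for r
  have m_nonneg: "m r \<ge> 0" for r
    unfolding m_def depth_weight_def using w_nonneg depth_kernel_nonneg[OF v]
    by (intro sum_nonneg mult_nonneg_nonneg) auto
  have "det (info_matrix v K S (invariant_design v K S w)) > 0"
    using det_info_matrix_nonneg optimal unfolding D_optimal_def by (simp add: order_less_le)
  then have "(\<Prod>r<nparams v K. m r) * det (base_matrix v K) > 0"
    unfolding det_info_matrix_invariant_design[OF v] m_def .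
  moreover have "(\<Prod>r<nparams v K. m r) \<ge> 0" using m_nonneg by (simp add: prod_nonneg)
  ultimately have prod_pos: "(\<Prod>r<nparams v K. m r) > 0" and "det (base_matrix v K) > 0"
    by (auto simp: zero_less_mult_iff)
  then show "det (base_matrix v K) > 0" by simp
  assume "r < nparams v K"
  then have "(\<Prod>r<nparams v K. m r) = 0" if "m r = 0" using that by (intro prod_zero) auto
  then have "m r \<noteq> 0" using prod_pos by (auto simp del: prod_zero_iff)
  then show "depth_weight v K S w (coord_attrs v K r) > 0" using m_nonneg[of r] by (simp add: m_def)
qed

text \<open>Mixing in the uniform design of depth \<open>d\<close> with weight \<open>\<epsilon>\<close> moves each \<open>\<mu>\<^sub>w(T)\<close> towards
  \<open>\<kappa>(T,d)\<close>; optimality makes the derivative of the resulting determinant at \<open>\<epsilon> = 0\<close> nonpositive.\<close>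
lemma sensitivity_le_nparams: assumes "d \<in> {1..S}" shows "sensitivity v K S w d \<le> real (nparams v K)"
proof -
  have "(\<Sum>r\<in>{..<nparams v K}. depth_kernel v K S (coord_attrs v K r) d / depth_weight v K S w (coord_attrs v K r))
      \<le> real (card {..<nparams v K})"
  proof (rule sum_ratio_le_card_if_prod_max)
    fix \<epsilon> :: real assume \<epsilon>: "0 < \<epsilon>" "\<epsilon> < 1"
    define w' where "w' d' = (1 - \<epsilon>) * w d' + \<epsilon> * (if d' = d then 1 else 0)" for d'
    have "\<forall>d\<in>{1..S}. w' d \<ge> 0" using w_nonneg \<epsilon> unfolding w'_def by auto
    moreover have "(\<Sum>d=1..S. w' d) = 1"
      unfolding w'_def using assms w_sum by (simp add: sum.distrib flip: sum_distrib_left)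
    ultimately have "det (info_matrix v K S (invariant_design v K S w')) \<le> det (info_matrix v K S (invariant_design v K S w))"
      using optimal is_design_invariant_design[OF v S_le_K] unfolding D_optimal_def by blast
    moreover have "depth_weight v K S w' T = depth_weight v K S w T + \<epsilon> * (depth_kernel v K S T d - depth_weight v K S w T)" for T
    proof -
      have "depth_weight v K S w' T = (\<Sum>d'=1..S. (1 - \<epsilon>) * (w d' * depth_kernel v K S T d') +
          \<epsilon> * (if d' = d then depth_kernel v K S T d' else 0))"
        unfolding depth_weight_def by (intro sum.cong refl) (simp add: w'_def algebra_simps)
      also have "\<dots> = (1 - \<epsilon>) * depth_weight v K S w T + \<epsilon> * depth_kernel v K S T d"
        unfolding depth_weight_def using assms by (simp add: sum.distrib flip: sum_distrib_left)
      finally show ?thesis by (simp add: algebra_simps)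
    qed
    ultimately show "(\<Prod>r\<in>{..<nparams v K}. depth_weight v K S w (coord_attrs v K r) + \<epsilon> *
        (depth_kernel v K S (coord_attrs v K r) d - depth_weight v K S w (coord_attrs v K r)))
      \<le> (\<Prod>r\<in>{..<nparams v K}. depth_weight v K S w (coord_attrs v K r))"
      using det_base_matrix_pos unfolding det_info_matrix_invariant_design[OF v] by simp
  qed (simp add: depth_weight_pos)
  then show ?thesis by (simp add: sensitivity_def)
qed

lemma sum_weighted_sensitivity: "(\<Sum>d=1..S. w d * sensitivity v K S w d) = real (nparams v K)"
proof -
  have "(\<Sum>d=1..S. w d * sensitivity v K S w d) = (\<Sum>r<nparams v K.
      (\<Sum>d=1..S. w d * depth_kernel v K S (coord_attrs v K r) d) / depth_weight v K S w (coord_attrs v K r))"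
    unfolding sensitivity_def by (simp add: sum_distrib_left sum_divide_distrib) (rule sum.swap)
  also have "\<dots> = (\<Sum>r<nparams v K. 1)"
  proof (rule sum.cong[OF refl])
    fix r assume "r \<in> {..<nparams v K}"
    then have "depth_weight v K S w (coord_attrs v K r) > 0" by (simp add: depth_weight_pos)
    then show "(\<Sum>d=1..S. w d * depth_kernel v K S (coord_attrs v K r) d) / depth_weight v K S w (coord_attrs v K r) = 1"
      unfolding depth_weight_def by simp
  qed
  finally show ?thesis by simp
qed

lemma sensitivity_eq_nparams: "d \<in> {1..S} \<Longrightarrow> w d > 0 \<Longrightarrow> sensitivity v K S w d = real (nparams v K)"
  using weighted_mean_eq_bound[of "{1..S}" w "sensitivity v K S w"] w_nonneg w_sum
    sensitivity_le_nparams sum_weighted_sensitivity by simp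

lemma support_gap:
  assumes "a \<in> {d\<in>{1..S}. w d > 0}" "b \<in> {d\<in>{1..S}. w d > 0}" "a < b" "b \<noteq> S"
  shows "b \<le> a + 1"
proof (rule ccontr)
  assume "\<not> b \<le> a + 1"
  obtain c1 c2 c3 where
    cubic: "\<And>d. d \<le> S \<Longrightarrow> sensitivity v K S w d = c1 * real d + c2 * (real d)^2 + c3 * (real d)^3"
    using sensitivity_cubic[OF v] by blast
  show False
  proof (rule cubic_no_distant_roots[of "- real (nparams v K)" S c1 c2 c3 a b])
    show "- real (nparams v K) < 0" using nparams_pos[OF v] S_pos S_le_K by simp
    show "- real (nparams v K) + c1 * real n + c2 * (real n)^2 + c3 * (real n)^3 \<le> 0" if "1 \<le> n" "n \<le> S" for n
      using sensitivity_le_nparams[of n] cubic[of n] that by simp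
    show "1 \<le> a" "a + 2 \<le> b" "b + 1 \<le> S" using assms \<open>\<not> b \<le> a + 1\<close> by auto
    show "- real (nparams v K) + c1 * real a + c2 * (real a)^2 + c3 * (real a)^3 = 0"
      "- real (nparams v K) + c1 * real b + c2 * (real b)^2 + c3 * (real b)^3 = 0"
      using sensitivity_eq_nparams[of a] sensitivity_eq_nparams[of b] cubic[of a] cubic[of b] assms by simp_all
  qed
qed

end

lemma subset_consecutive_pair_and_last:
  fixes W :: "nat set"
  assumes "W \<subseteq> {1..S}" and "1 \<le> S"
    and gap: "\<And>a b. a \<in> W \<Longrightarrow> b \<in> W \<Longrightarrow> a < b \<Longrightarrow> b \<noteq> S \<Longrightarrow> b \<le> a + 1"
  shows "card W \<le> 3 \<and> (\<exists>ds\<in>{1..S}. W \<subseteq> {ds, ds + 1, S})"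
proof -
  obtain ds where ds: "ds \<in> {1..S}" "W \<subseteq> {ds, ds + 1, S}"
  proof (cases "W - {S} = {}")
    case True
    then show thesis by (intro that[of S]) (use assms in auto)
  next
    case False
    define ds where "ds = Min (W - {S})"
    have fin: "finite (W - {S})" using assms(1) finite_subset by blast
    have ds: "ds \<in> W - {S}" unfolding ds_def by (rule Min_in[OF fin False])
    have min: "\<forall>b\<in>W - {S}. ds \<le> b" unfolding ds_def using fin by simp
    show thesis
    proof (rule that)
      show "ds \<in> {1..S}" using ds assms(1) by auto
      show "W \<subseteq> {ds, ds + 1, S}"
      proof
        fix b assume "b \<in> W"
        show "b \<in> {ds, ds + 1, S}"
        proof (cases "b = S \<or> b = ds")
          case False
          with \<open>b \<in> W\<close> min have "ds < b" using le_neq_implies_less by blast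
          then show ?thesis using gap[of ds b] ds \<open>b \<in> W\<close> False by simp
        qed auto
      qed
    qed
  qed
  have "card W \<le> card {ds, ds + 1, S}" by (rule card_mono[OF _ ds(2)]) simp
  also have "\<dots> \<le> 3" by (simp add: card_insert_if)
  finally show ?thesis using ds by blast
qed

theorem theorem3:
  fixes v K S :: nat and w :: "nat \<Rightarrow> real"
  assumes "v \<ge> 2" and "K \<ge> 3" and "3 \<le> S" and "S \<le> K"
    and "\<forall>d\<in>{1..S}. w d \<ge> 0" and "(\<Sum>d=1..S. w d) = 1"
    and "D_optimal v K S (\<lambda>x. \<Sum>d=1..S. w d * uniform_depth_design v K S d x)"
  shows "card {d\<in>{1..S}. w d > 0} \<le> 3 \<and>
         (\<exists>ds\<in>{1..S}. {d\<in>{1..S}. w d > 0} \<subseteq> {ds, ds + 1, S})"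
proof -
  interpret optimal_invariant_design v K S w
    using assms by unfold_locales (simp_all add: invariant_design_def)
  show ?thesis
    by (rule subset_consecutive_pair_and_last[OF _ _ support_gap]) (use assms(3) in auto)
qed

end
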